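(* Let $\mathcal{F}^*$ be one of $\mathcal{F}^c,\mathcal{F}^{ev},\mathcal{F}^o$, let $\kappa=\kappa(H,\lambda,\alpha)$ be a nonsingular quadratic function in $\mathcal{F}^*$ and let $H_0$ be a direct summand of $H$ such that $\kappa_0:=\kappa|_{H_0}$ is nondegenerate. Then: 1. $H_1:=H_0^\perp=\{v\in H:\lambda(v,v_0)=0\ \forall v_0\in H_0\}$ is a direct summand of $H$; 2. $\kappa_1:=(\kappa|_{H_1})^-$ and $\kappa_0$ are nondegenerate members of $\mathcal{F}^*$; 3. there is an isometry $\theta_\kappa$ of the induced quadratic linking families $\delta^*(\kappa_0)\cong\delta^*(\kappa_1)$; 4. $\kappa$ is isometric to $\kappa_0\cup_{\theta_\kappa}\kappa_1^-$.
   Context: A quadratic function $\kappa(H,\lambda,\alpha)$: $H$ finitely generated free abelian, $\lambda$ symmetric bilinear into $\mathbb{Z}$, $\alpha\in H^*$, $\kappa(v)=\lambda(v,v)+\alpha(v)$; adjoint $\hat\lambda:H\to H^*$; nondegenerate if $\hat\lambda$ injective, nonsingular if bijective; $\kappa^-=\kappa(H,-\lambda,\alpha)$; restriction to a subgroup restricts $\lambda$ and $\alpha$. Families: $\mathcal{F}^c$ characteristic ($\lambda(v,v)+\alpha(v)$ even); $\mathcal{F}^{ev}$: $\lambda$ even; $\mathcal{F}^o$: $\lambda$ even, $\alpha=0$. For nondegenerate $\kappa_i=\kappa(H_i,\lambda_i,\alpha_i)$: $[x]$ is the class in $\mathrm{Cok}\,\hat\lambda_i$; $\lambda_i^{-1}(x,y)=y(v)/r$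 with $rx=\hat\lambda_i(v)$, $r\ne 0$; $q^{ev}(\kappa_i)([x])=\frac12\lambda_i^{-1}(x,x)$ (for $\mathcal{F}^{ev},\mathcal{F}^o$), $q^c(\kappa_i)([x])=\frac12(\lambda_i^{-1}(x,x)+\lambda_i^{-1}(x,\alpha_i))$ (for $\mathcal{F}^c$), mod $\mathbb{Z}$. An isometry $\delta^*(\kappa_0)\cong\delta^*(\kappa_1)$ is an isomorphism $\theta:\mathrm{Cok}\,\hat\lambda_0\to\mathrm{Cok}\,\hat\lambda_1$ with $\theta([\alpha_0])=[\alpha_1]$ and $q^*(\kappa_1)\circ\theta=q^*(\kappa_0)$. For such $\theta$, $\kappa_0\cup_\theta\kappa_1^-$ denotes $\kappa(H',\lambda',\alpha')$ with $H'=\{(x_0,x_1)\in H_0^*\oplus H_1^*:\theta[x_0]=[x_1]\}$, $\lambda'((x_0,x_1),(y_0,y_1))=\lambda_0^{-1}(x_0,y_0)-\lambda_1^{-1}(x_1,y_1)$, $\alpha'=\hat\lambda'((\alpha_0,\alpha_1))$. *)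

theory Defs
  imports Complex_Main "HOL-Library.Function_Algebras" "HOL-Library.Product_Plus" "HOL-Algebra.Group"
begin

text \<open>A quadratic function kappa(H, lambda, alpha) is represented by a subgroup H of an
  ambient abelian group type 'v together with functions lambda :: 'v => 'v => int and
  alpha :: 'v => int; only their values on H matter.\<close>

definition zsc :: "int \<Rightarrow> 'a::ab_group_add \<Rightarrow> 'a" where
  "zsc k v = (if 0 \<le> k then (\<Sum>i<nat k. v) else - (\<Sum>i<nat (- k). v))"

definition lincomb :: "'a::ab_group_add list \<Rightarrow> int list \<Rightarrow> 'a" where
  "lincomb b c = (\<Sum>i<length b. zsc (c ! i) (b ! i))"

definition fg_free :: "'a::ab_group_add set \<Rightarrow> bool" where
  "fg_free H \<longleftrightarrow> (\<exists>b::'a list.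
     (\<forall>v. v \<in> H \<longleftrightarrow> (\<exists>c. length c = length b \<and> v = lincomb b c)) \<and>
     (\<forall>c c'. length c = length b \<longrightarrow> length c' = length b \<longrightarrow>
              lincomb b c = lincomb b c' \<longrightarrow> c = c'))"

definition subgrp :: "'a::ab_group_add set \<Rightarrow> bool" where
  "subgrp S \<longleftrightarrow> 0 \<in> S \<and> (\<forall>x\<in>S. \<forall>y\<in>S. x + y \<in> S) \<and> (\<forall>x\<in>S. - x \<in> S)"

definition direct_summand :: "'a::ab_group_add set \<Rightarrow> 'a set \<Rightarrow> bool" where
  "direct_summand H0 H \<longleftrightarrow> subgrp H0 \<and> H0 \<subseteq> H \<and>
     (\<exists>K. subgrp K \<and> K \<subseteq> H \<and> H0 \<inter> K = {0} \<and> (\<forall>v\<in>H. \<exists>a\<in>H0. \<exists>b\<in>K. v = a + b))"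

definition is_qf :: "'a::ab_group_add set \<Rightarrow> ('a \<Rightarrow> 'a \<Rightarrow> int) \<Rightarrow> ('a \<Rightarrow> int) \<Rightarrow> bool" where
  "is_qf H lam alpha \<longleftrightarrow> fg_free H \<and>
     (\<forall>v\<in>H. \<forall>w\<in>H. lam v w = lam w v) \<and>
     (\<forall>u\<in>H. \<forall>v\<in>H. \<forall>w\<in>H. lam (u + v) w = lam u w + lam v w) \<and>
     (\<forall>v\<in>H. \<forall>w\<in>H. alpha (v + w) = alpha v + alpha w)"

text \<open>The dual H^* = Hom(H, Z), elements normalised to be 0 outside H.\<close>
definition dual :: "'a::ab_group_add set \<Rightarrow> ('a \<Rightarrow> int) set" where
  "dual H = {f. (\<forall>x\<in>H. \<forall>y\<in>H. f (x + y) = f x + f y) \<and> (\<forall>x. x \<notin> H \<longrightarrow> f x = 0)}"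

definition dual_of :: "'a set \<Rightarrow> ('a \<Rightarrow> int) \<Rightarrow> ('a \<Rightarrow> int)" where
  "dual_of H f = (\<lambda>w. if w \<in> H then f w else 0)"

definition adj :: "'a set \<Rightarrow> ('a \<Rightarrow> 'a \<Rightarrow> int) \<Rightarrow> 'a \<Rightarrow> ('a \<Rightarrow> int)" where
  "adj H lam v = dual_of H (lam v)"

definition nondeg :: "'a::ab_group_add set \<Rightarrow> ('a \<Rightarrow> 'a \<Rightarrow> int) \<Rightarrow> bool" where
  "nondeg H lam \<longleftrightarrow> (\<forall>v\<in>H. adj H lam v = 0 \<longrightarrow> v = 0)"

definition nonsing :: "'a::ab_group_add set \<Rightarrow> ('a \<Rightarrow> 'a \<Rightarrow> int) \<Rightarrow> bool" where
  "nonsing H lam \<longleftrightarrow> nondeg H lam \<and> (\<forall>f\<in>dual H. \<exists>v\<in>H. adj H lam v = f)"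

definition neg_form :: "('a \<Rightarrow> 'a \<Rightarrow> int) \<Rightarrow> ('a \<Rightarrow> 'a \<Rightarrow> int)" where
  "neg_form lam = (\<lambda>v w. - lam v w)"

datatype family = Fc | Fev | Fo

definition in_family :: "family \<Rightarrow> 'a::ab_group_add set \<Rightarrow> ('a \<Rightarrow> 'a \<Rightarrow> int) \<Rightarrow> ('a \<Rightarrow> int) \<Rightarrow> bool" where
  "in_family F H lam alpha \<longleftrightarrow> is_qf H lam alpha \<and>
     (case F of
        Fc \<Rightarrow> (\<forall>v\<in>H. even (lam v v + alpha v))
      | Fev \<Rightarrow> (\<forall>v\<in>H. even (lam v v))
      | Fo \<Rightarrow> (\<forall>v\<in>H. even (lam v v)) \<and> (\<forall>v\<in>H. alpha v = 0))"

definition cls :: "'a::ab_group_add set \<Rightarrow> ('a \<Rightarrow> 'a \<Rightarrow> int) \<Rightarrow> ('a \<Rightarrow> int) \<Rightarrow> ('a \<Rightarrow> int) set" where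
  "cls H lam x = {y \<in> dual H. \<exists>v\<in>H. y = x + adj H lam v}"

definition cok_grp :: "'a::ab_group_add set \<Rightarrow> ('a \<Rightarrow> 'a \<Rightarrow> int) \<Rightarrow> ('a \<Rightarrow> int) set monoid" where
  "cok_grp H lam = \<lparr>carrier = cls H lam ` dual H,
                     mult = (\<lambda>A B. {a + b | a b. a \<in> A \<and> b \<in> B}),
                     one = cls H lam 0\<rparr>"

definition linv :: "'a::ab_group_add set \<Rightarrow> ('a \<Rightarrow> 'a \<Rightarrow> int) \<Rightarrow> ('a \<Rightarrow> int) \<Rightarrow> ('a \<Rightarrow> int) \<Rightarrow> rat" where
  "linv H lam x y = (THE q. \<exists>v\<in>H. \<exists>r::int. r \<noteq> 0 \<and> (\<lambda>w. r * x w) = adj H lam v \<and>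
                              q = of_int (y v) / of_int r)"

text \<open>The quadratic linking function q^*(kappa) on Cok lam^, with values in Q/Z
  represented by their fractional part in [0,1).\<close>
definition qval :: "family \<Rightarrow> 'a::ab_group_add set \<Rightarrow> ('a \<Rightarrow> 'a \<Rightarrow> int) \<Rightarrow> ('a \<Rightarrow> int) \<Rightarrow> ('a \<Rightarrow> int) \<Rightarrow> rat" where
  "qval F H lam alpha x = (case F of
       Fc \<Rightarrow> (linv H lam x x + linv H lam x (dual_of H alpha)) / 2
     | _ \<Rightarrow> linv H lam x x / 2)"

definition qlink :: "family \<Rightarrow> 'a::ab_group_add set \<Rightarrow> ('a \<Rightarrow> 'a \<Rightarrow> int) \<Rightarrow> ('a \<Rightarrow> int) \<Rightarrow> ('a \<Rightarrow> int) set \<Rightarrow> rat" where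
  "qlink F H lam alpha c = frac (qval F H lam alpha (SOME x. x \<in> c))"

definition lf_isometry :: "family \<Rightarrow> 'a::ab_group_add set \<Rightarrow> ('a \<Rightarrow> 'a \<Rightarrow> int) \<Rightarrow> ('a \<Rightarrow> int)
     \<Rightarrow> 'a set \<Rightarrow> ('a \<Rightarrow> 'a \<Rightarrow> int) \<Rightarrow> ('a \<Rightarrow> int) \<Rightarrow> (('a \<Rightarrow> int) set \<Rightarrow> ('a \<Rightarrow> int) set) \<Rightarrow> bool" where
  "lf_isometry F H0 lam0 alpha0 H1 lam1 alpha1 theta \<longleftrightarrow>
     theta \<in> iso (cok_grp H0 lam0) (cok_grp H1 lam1) \<and>
     theta (cls H0 lam0 (dual_of H0 alpha0)) = cls H1 lam1 (dual_of H1 alpha1) \<and>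
     (\<forall>c\<in>carrier (cok_grp H0 lam0). qlink F H1 lam1 alpha1 (theta c) = qlink F H0 lam0 alpha0 c)"

text \<open>The glued quadratic function kappa0 \<union>_theta kappa1^- = kappa(H', lam', alpha').
  lam' and alpha' are rational-valued a priori.\<close>
definition glue_carrier :: "'a::ab_group_add set \<Rightarrow> ('a \<Rightarrow> 'a \<Rightarrow> int) \<Rightarrow> 'a set \<Rightarrow> ('a \<Rightarrow> 'a \<Rightarrow> int)
     \<Rightarrow> (('a \<Rightarrow> int) set \<Rightarrow> ('a \<Rightarrow> int) set) \<Rightarrow> (('a \<Rightarrow> int) \<times> ('a \<Rightarrow> int)) set" where
  "glue_carrier H0 lam0 H1 lam1 theta =
     {(x0, x1). x0 \<in> dual H0 \<and> x1 \<in> dual H1 \<and> theta (cls H0 lam0 x0) = cls H1 lam1 x1}"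

definition glue_form :: "'a::ab_group_add set \<Rightarrow> ('a \<Rightarrow> 'a \<Rightarrow> int) \<Rightarrow> 'a set \<Rightarrow> ('a \<Rightarrow> 'a \<Rightarrow> int)
     \<Rightarrow> ('a \<Rightarrow> int) \<times> ('a \<Rightarrow> int) \<Rightarrow> ('a \<Rightarrow> int) \<times> ('a \<Rightarrow> int) \<Rightarrow> rat" where
  "glue_form H0 lam0 H1 lam1 = (\<lambda>(x0, x1) (y0, y1). linv H0 lam0 x0 y0 - linv H1 lam1 x1 y1)"

definition glue_lin :: "'a::ab_group_add set \<Rightarrow> ('a \<Rightarrow> 'a \<Rightarrow> int) \<Rightarrow> ('a \<Rightarrow> int) \<Rightarrow> 'a set \<Rightarrow> ('a \<Rightarrow> 'a \<Rightarrow> int) \<Rightarrow> ('a \<Rightarrow> int)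
     \<Rightarrow> ('a \<Rightarrow> int) \<times> ('a \<Rightarrow> int) \<Rightarrow> rat" where
  "glue_lin H0 lam0 alpha0 H1 lam1 alpha1 =
     glue_form H0 lam0 H1 lam1 (dual_of H0 alpha0, dual_of H1 alpha1)"

definition isometric_to :: "'a::ab_group_add set \<Rightarrow> ('a \<Rightarrow> 'a \<Rightarrow> int) \<Rightarrow> ('a \<Rightarrow> int)
     \<Rightarrow> 'b::ab_group_add set \<Rightarrow> ('b \<Rightarrow> 'b \<Rightarrow> rat) \<Rightarrow> ('b \<Rightarrow> rat) \<Rightarrow> bool" where
  "isometric_to H lam alpha H' lam' alpha' \<longleftrightarrow> (\<exists>phi. bij_betw phi H H' \<and>
     (\<forall>v\<in>H. \<forall>w\<in>H. phi (v + w) = phi v + phi w) \<and>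
     (\<forall>v\<in>H. \<forall>w\<in>H. lam' (phi v) (phi w) = of_int (lam v w)) \<and>
     (\<forall>v\<in>H. alpha' (phi v) = of_int (alpha v)))"

end

theory Submission
  imports Defs "Jordan_Normal_Form.Determinant"
begin

text \<open>Let rho0 : H \<rightarrow> H0^* and rho1 : H \<rightarrow> H1^* be the restrictions of the adjoint of lambda.
  Because lambda is nonsingular and H0 is a direct summand, rho0 is onto; as H0^* is free it
  splits, so its kernel H1 is a direct summand. Because lambda is nondegenerate on the free group
  H0, the adjugate of a Gram matrix gives for each v some r \<noteq> 0 with r v = a0 + a1, a0 \<in> H0,
  a1 \<in> H1. Hence (rho0, rho1) is injective, and [rho0 v] = [rho0 w] iff v - w \<in> H0 + H1 iff
  [rho1 v] = [rho1 w], so theta [rho0 v] = [rho1 v] is a well defined isomorphism of the cokernels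
  and the image of (rho0, rho1) is the glued group. The identity
  lambda0^-1(rho0 v, rho0 u) + (lambda|H1)^-1(rho1 v, rho1 u) = (lambda(u, a0) + lambda(u, a1)) / r
  = lambda(u, v) shows that (rho0, rho1) is an isometry onto the glued form; with u = v and
  with u representing alpha it shows that theta preserves the linking functions modulo \<int>.\<close>

lemma zsc_0 [simp]: "zsc 0 v = 0"
  by (simp add: zsc_def)

lemma zsc_succ: "zsc (k + 1) v = zsc k v + v"
proof (cases "k \<ge> 0")
  case True
  then have "nat (k + 1) = Suc (nat k)" by simp
  with True show ?thesis by (simp add: zsc_def add.commute)
next
  case False
  then have k: "nat (- k) = Suc (nat (- (k + 1)))" by simp
  show ?thesis
  proof (cases "k = -1")
    case False
    with \<open>\<not> k \<ge> 0\<close> have "\<not> k + 1 \<ge> 0" by simp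
    with \<open>\<not> k \<ge> 0\<close> k show ?thesis by (simp add: zsc_def)
  qed (simp add: zsc_def)
qed

lemma zsc_add_left: "zsc (k + l) v = zsc k v + zsc l v"
proof (induction l rule: int_induct[where k = 0])
  case (step1 i)
  then show ?case using zsc_succ[of "k + i" v] zsc_succ[of i v] by (simp add: add.assoc)
next
  case (step2 i)
  then show ?case using zsc_succ[of "k + (i - 1)" v] zsc_succ[of "i - 1" v] by (simp add: algebra_simps)
qed simp

lemma zsc_1 [simp]: "zsc 1 v = v"
  using zsc_succ[of 0 v] by simp

lemma zsc_uminus_left: "zsc (- k) v = - zsc k v"
  using zsc_add_left[of k "- k" v] by (simp add: eq_neg_iff_add_eq_0 add.commute)

lemma zsc_add_right: "zsc k (v + w) = zsc k v + zsc k w"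
proof (induction k rule: int_induct[where k = 0])
  case (step1 i)
  then show ?case using zsc_succ[of i "v + w"] zsc_succ[of i v] zsc_succ[of i w] by (simp add: algebra_simps)
next
  case (step2 i)
  then show ?case using zsc_succ[of "i - 1" "v + w"] zsc_succ[of "i - 1" v] zsc_succ[of "i - 1" w]
    by (simp add: algebra_simps)
qed simp

lemma zsc_int [simp]: "zsc k (m :: int) = k * m"
proof (induction k rule: int_induct[where k = 0])
  case (step1 i)
  then show ?case using zsc_succ[of i m] by (simp add: algebra_simps)
next
  case (step2 i)
  then show ?case using zsc_succ[of "i - 1" m] by (simp add: algebra_simps)
qed simp

lemma subgrp_zero: "subgrp S \<Longrightarrow> 0 \<in> S"
  and subgrp_add: "subgrp S \<Longrightarrow> x \<in> S \<Longrightarrow> y \<in> S \<Longrightarrow> x + y \<in> S"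
  and subgrp_uminus: "subgrp S \<Longrightarrow> x \<in> S \<Longrightarrow> - x \<in> S"
  by (simp_all add: subgrp_def)

lemma subgrp_diff: "subgrp S \<Longrightarrow> x \<in> S \<Longrightarrow> y \<in> S \<Longrightarrow> x - y \<in> S"
  unfolding diff_conv_add_uminus by (intro subgrp_add subgrp_uminus)

lemma subgrp_zsc:
  assumes "subgrp S" "v \<in> S"
  shows "zsc k v \<in> S"
proof (induction k rule: int_induct[where k = 0])
  case base
  then show ?case using assms by (simp add: subgrp_zero)
next
  case (step1 i)
  then show ?case using assms by (simp add: zsc_succ subgrp_add)
next
  case (step2 i)
  have "zsc (i - 1) v = zsc i v - v" using zsc_succ[of "i - 1" v] by simp
  with step2 assms show ?case by (simp add: subgrp_diff)
qed

lemma subgrp_sum: "subgrp S \<Longrightarrow> (\<And>i. i \<in> A \<Longrightarrow> f i \<in> S) \<Longrightarrow> sum f A \<in> S"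
  by (induction A rule: infinite_finite_induct) (auto simp: subgrp_zero subgrp_add)

definition additive_on :: "'a::ab_group_add set \<Rightarrow> ('a \<Rightarrow> 'b::ab_group_add) \<Rightarrow> bool" where
  "additive_on S f \<longleftrightarrow> (\<forall>x\<in>S. \<forall>y\<in>S. f (x + y) = f x + f y)"

context
  fixes S :: "'a::ab_group_add set" and f :: "'a \<Rightarrow> 'b::ab_group_add"
  assumes S: "subgrp S" and f: "additive_on S f"
begin

lemma additive_on_add: "x \<in> S \<Longrightarrow> y \<in> S \<Longrightarrow> f (x + y) = f x + f y"
  using f by (simp add: additive_on_def)

lemma additive_on_zero: "f 0 = 0"
  using additive_on_add[of 0 0] subgrp_zero[OF S] by simp

lemma additive_on_uminus: "x \<in> S \<Longrightarrow> f (- x) = - f x"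
  using additive_on_add[of x "- x"] additive_on_zero subgrp_uminus[OF S] minus_unique[of "f x" "f (- x)"]
  by simp

lemma additive_on_diff: "x \<in> S \<Longrightarrow> y \<in> S \<Longrightarrow> f (x - y) = f x - f y"
  using additive_on_add[of x "- y"] additive_on_uminus[of y] subgrp_uminus[OF S] by simp

lemma additive_on_zsc: "v \<in> S \<Longrightarrow> f (zsc k v) = zsc k (f v)"
proof (induction k rule: int_induct[where k = 0])
  case base
  then show ?case by (simp add: additive_on_zero)
next
  case (step1 i)
  then show ?case by (simp add: zsc_succ additive_on_add subgrp_zsc[OF S])
next
  case (step2 i)
  have succ: "zsc i u = zsc (i - 1) u + u" for u :: "'c::ab_group_add"
    using zsc_succ[of "i - 1" u] by simp
  have "f (zsc (i - 1) v) + f v = zsc (i - 1) (f v) + f v"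
    using step2 succ[of v] succ[of "f v"] additive_on_add[OF subgrp_zsc[OF S step2.prems]] by simp
  then show ?case by simp
qed

lemma additive_on_sum: "(\<And>i. i \<in> A \<Longrightarrow> g i \<in> S) \<Longrightarrow> f (sum g A) = (\<Sum>i\<in>A. f (g i))"
proof (induction A rule: infinite_finite_induct)
  case (insert x A)
  then show ?case by (simp add: additive_on_add subgrp_sum[OF S])
qed (simp_all add: additive_on_zero)

lemma subgrp_image: "subgrp (f ` S)"
  unfolding subgrp_def
proof (intro conjI ballI)
  show "0 \<in> f ` S"
    using additive_on_zero subgrp_zero[OF S] by (metis image_eqI)
next
  fix x y assume "x \<in> f ` S" "y \<in> f ` S"
  then obtain a b where "a \<in> S" "b \<in> S" "x = f a" "y = f b" by blast
  then show "x + y \<in> f ` S"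
    using additive_on_add subgrp_add[OF S] by (metis image_eqI)
next
  fix x assume "x \<in> f ` S"
  then obtain a where "a \<in> S" "x = f a" by blast
  then show "- x \<in> f ` S"
    using additive_on_uminus subgrp_uminus[OF S] by (metis image_eqI)
qed

lemma subgrp_kernel: "subgrp {x \<in> S. f x = 0}"
  unfolding subgrp_def
  using additive_on_zero additive_on_add additive_on_uminus subgrp_zero[OF S]
    subgrp_add[OF S] subgrp_uminus[OF S]
  by auto

end

text \<open>Bases are handled as functions on {..<n} rather than as the lists of lincomb.\<close>

definition lin_comb :: "(nat \<Rightarrow> 'a::ab_group_add) \<Rightarrow> nat \<Rightarrow> (nat \<Rightarrow> int) \<Rightarrow> 'a" where
  "lin_comb e n c = (\<Sum>i<n. zsc (c i) (e i))"

definition is_basis :: "(nat \<Rightarrow> 'a::ab_group_add) \<Rightarrow> nat \<Rightarrow> 'a set \<Rightarrow> bool" where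
  "is_basis e n S \<longleftrightarrow> (\<forall>v. v \<in> S \<longleftrightarrow> (\<exists>c. v = lin_comb e n c)) \<and>
     (\<forall>c. lin_comb e n c = 0 \<longrightarrow> (\<forall>i<n. c i = 0))"

lemma lin_comb_add: "lin_comb e n (\<lambda>i. c i + d i) = lin_comb e n c + lin_comb e n d"
  by (simp add: lin_comb_def zsc_add_left sum.distrib)

lemma lin_comb_uminus: "lin_comb e n (\<lambda>i. - c i) = - lin_comb e n c"
  by (simp add: lin_comb_def zsc_uminus_left sum_negf)

lemma lin_comb_diff: "lin_comb e n (\<lambda>i. c i - d i) = lin_comb e n c - lin_comb e n d"
  using lin_comb_add[of e n c "\<lambda>i. - d i"] lin_comb_uminus[of e n d] by simp

lemma lin_comb_cong:
  "(\<And>i. i < n \<Longrightarrow> c i = d i) \<Longrightarrow> (\<And>i. i < n \<Longrightarrow> e i = e' i) \<Longrightarrow> lin_comb e n c = lin_comb e' n d"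
  unfolding lin_comb_def by (rule sum.cong) auto

lemma lin_comb_Suc: "lin_comb e (Suc n) c = lin_comb e n c + zsc (c n) (e n)"
  by (simp add: lin_comb_def)

lemma lin_comb_zero [simp]: "lin_comb e n (\<lambda>i. 0) = 0"
  by (simp add: lin_comb_def)

lemma lin_comb_unit: "i < n \<Longrightarrow> lin_comb e n (\<lambda>j. if j = i then 1 else 0) = e i"
proof -
  have "lin_comb e n (\<lambda>j. if j = i then 1 else 0) = (\<Sum>j<n. if j = i then e j else 0)"
    unfolding lin_comb_def by (rule sum.cong) auto
  then show "i < n \<Longrightarrow> ?thesis" by simp
qed

lemma subgrp_lin_comb: "subgrp S \<Longrightarrow> (\<And>j. j < n \<Longrightarrow> e j \<in> S) \<Longrightarrow> lin_comb e n c \<in> S"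
  unfolding lin_comb_def by (rule subgrp_sum) (auto intro: subgrp_zsc)

lemma additive_on_lin_comb:
  fixes f :: "'a::ab_group_add \<Rightarrow> int"
  assumes "subgrp S" "additive_on S f" "\<And>j. j < n \<Longrightarrow> e j \<in> S"
  shows "f (lin_comb e n c) = (\<Sum>j<n. c j * f (e j))"
proof -
  have "f (lin_comb e n c) = (\<Sum>j<n. f (zsc (c j) (e j)))"
    unfolding lin_comb_def by (rule additive_on_sum[OF assms(1,2)]) (simp add: subgrp_zsc assms(1,3))
  then show ?thesis using additive_on_zsc[OF assms(1,2) assms(3)] by simp
qed

lemma lincomb_eq_lin_comb:
  "length c = length b \<Longrightarrow> lincomb b c = lin_comb (\<lambda>i. b ! i) (length b) (\<lambda>i. c ! i)"
  unfolding lin_comb_def lincomb_def by simp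

lemma lin_comb_eq_lincomb: "lin_comb (\<lambda>i. b ! i) (length b) c = lincomb b (map c [0..<length b])"
  unfolding lin_comb_def lincomb_def by (rule sum.cong) auto

lemma fg_free_imp_basis:
  assumes "fg_free S"
  obtains e n where "is_basis e n S"
proof -
  obtain b where span: "\<forall>v. v \<in> S \<longleftrightarrow> (\<exists>c. length c = length b \<and> v = lincomb b c)"
    and indep: "\<forall>c c'. length c = length b \<longrightarrow> length c' = length b \<longrightarrow> lincomb b c = lincomb b c' \<longrightarrow> c = c'"
    using assms unfolding fg_free_def by blast
  have "is_basis (\<lambda>i. b ! i) (length b) S"
    unfolding is_basis_def
  proof (intro conjI allI impI)
    fix v
    show "v \<in> S \<longleftrightarrow> (\<exists>c. v = lin_comb (\<lambda>i. b ! i) (length b) c)"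
      using span lin_comb_eq_lincomb lincomb_eq_lin_comb by (metis length_map length_upt minus_nat.diff_0)
  next
    fix c i assume "lin_comb (\<lambda>i. b ! i) (length b) c = 0" "i < length b"
    then have "map c [0..<length b] = map (\<lambda>i. 0) [0..<length b]"
      using lin_comb_eq_lincomb[of b c] lin_comb_eq_lincomb[of b "\<lambda>i. 0"] by (intro indep[rule_format]) simp_all
    then show "c i = 0" using \<open>i < length b\<close> by (simp add: map_eq_conv)
  qed
  then show thesis by (rule that)
qed

context
  fixes e :: "nat \<Rightarrow> 'a::ab_group_add" and n :: nat and S :: "'a set"
  assumes B: "is_basis e n S"
begin

lemma basis_span: "v \<in> S \<longleftrightarrow> (\<exists>c. v = lin_comb e n c)"
  using B unfolding is_basis_def by blast

lemma basis_lin_comb_mem [simp]: "lin_comb e n c \<in> S"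
  using basis_span by blast

lemma basis_unique: "lin_comb e n c = lin_comb e n d \<Longrightarrow> i < n \<Longrightarrow> c i = d i"
  using B lin_comb_diff[of e n c d] unfolding is_basis_def by fastforce

lemma basis_subgrp: "subgrp S"
  unfolding subgrp_def using basis_span lin_comb_add lin_comb_uminus basis_lin_comb_mem
  by (metis lin_comb_zero)

lemma basis_mem: "i < n \<Longrightarrow> e i \<in> S"
  using lin_comb_unit[of i n e] basis_lin_comb_mem by metis

definition coord :: "'a \<Rightarrow> nat \<Rightarrow> int" where
  "coord v = (SOME c. v = lin_comb e n c)"

lemma lin_comb_coord: "v \<in> S \<Longrightarrow> lin_comb e n (coord v) = v"
  unfolding coord_def using basis_span by (metis (mono_tags) someI_ex)

lemma coord_lin_comb: "i < n \<Longrightarrow> coord (lin_comb e n c) i = c i"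
  using lin_comb_coord[OF basis_lin_comb_mem[of c]] basis_unique by blast

lemma coord_add: "v \<in> S \<Longrightarrow> w \<in> S \<Longrightarrow> i < n \<Longrightarrow> coord (v + w) i = coord v i + coord w i"
  using coord_lin_comb[of i "\<lambda>j. coord v j + coord w j"] lin_comb_add[of e n "coord v" "coord w"]
    lin_comb_coord by simp

lemma additive_on_coord: "i < n \<Longrightarrow> additive_on S (\<lambda>v. coord v i)"
  unfolding additive_on_def using coord_add by blast

lemma coord_basis: "i < n \<Longrightarrow> j < n \<Longrightarrow> coord (e i) j = (if j = i then 1 else 0)"
  using coord_lin_comb[of j "\<lambda>j. if j = i then 1 else 0"] lin_comb_unit[of i n e] by simp

lemma basis_torsion_free:
  assumes v: "v \<in> S" and r: "r \<noteq> 0" and z: "zsc r v = 0"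
  shows "v = 0"
proof -
  have "r * coord v i = 0" if "i < n" for i
    using additive_on_zsc[OF basis_subgrp additive_on_coord[OF that] v, of r] z
      coord_lin_comb[OF that, of "\<lambda>_. 0"] by simp
  then have "lin_comb e n (coord v) = lin_comb e n (\<lambda>_. 0)"
    using r by (intro lin_comb_cong) auto
  then show ?thesis using lin_comb_coord[OF v] by simp
qed

end

lemma basis_imp_fg_free:
  assumes B: "is_basis e n S"
  shows "fg_free S"
  unfolding fg_free_def
proof (intro exI[of _ "map e [0..<n]"] conjI allI impI)
  let ?b = "map e [0..<n]"
  have comb: "lin_comb e n c = lin_comb (\<lambda>i. ?b ! i) (length ?b) c" for c
    unfolding lin_comb_def by (auto intro: sum.cong)
  fix v
  show "v \<in> S \<longleftrightarrow> (\<exists>c. length c = length ?b \<and> v = lincomb ?b c)"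
  proof
    assume "v \<in> S"
    then obtain c where "v = lin_comb e n c" using basis_span[OF B] by blast
    then have "v = lincomb ?b (map c [0..<n])" using comb lin_comb_eq_lincomb[of ?b c] by simp
    then show "\<exists>c. length c = length ?b \<and> v = lincomb ?b c" by (intro exI[of _ "map c [0..<n]"]) simp
  next
    assume "\<exists>c. length c = length ?b \<and> v = lincomb ?b c"
    then obtain c where "length c = length ?b" "v = lincomb ?b c" by blast
    then have "v = lin_comb e n (\<lambda>i. c ! i)" using comb lincomb_eq_lin_comb[of c ?b] by simp
    then show "v \<in> S" using B by simp
  qed
next
  let ?b = "map e [0..<n]"
  fix c c' :: "int list"
  assume l: "length c = length ?b" "length c' = length ?b" "lincomb ?b c = lincomb ?b c'"
  then have "lin_comb e n (\<lambda>i. c ! i) = lin_comb e n (\<lambda>i. c' ! i)"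
    using lincomb_eq_lin_comb[of c ?b] lincomb_eq_lin_comb[of c' ?b] lin_comb_cong[of n _ _ e "\<lambda>i. ?b ! i"]
    by simp
  then show "c = c'" using l basis_unique[OF B] by (intro nth_equalityI) auto
qed

lemma fg_free_iff_basis: "fg_free S \<longleftrightarrow> (\<exists>e n. is_basis e n S)"
  using fg_free_imp_basis basis_imp_fg_free by metis

lemma basis_Suc_kernel_last_coord:
  assumes B: "is_basis e (Suc n) H"
  shows "is_basis e n {v \<in> H. coord e (Suc n) v n = 0}"
proof -
  have drop_last: "lin_comb e (Suc n) (c(n := 0)) = lin_comb e n c" for c
    by (simp add: lin_comb_Suc) (rule lin_comb_cong, auto)
  show ?thesis
    unfolding is_basis_def
  proof (intro conjI allI impI)
    fix v
    show "v \<in> {v \<in> H. coord e (Suc n) v n = 0} \<longleftrightarrow> (\<exists>c. v = lin_comb e n c)"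
    proof
      assume "v \<in> {v \<in> H. coord e (Suc n) v n = 0}"
      then have "v \<in> H" "coord e (Suc n) v n = 0" by simp_all
      then have "v = lin_comb e (Suc n) (coord e (Suc n) v)" using lin_comb_coord[OF B] by simp
      also have "\<dots> = lin_comb e n (coord e (Suc n) v)"
        using \<open>coord e (Suc n) v n = 0\<close> by (simp add: lin_comb_Suc)
      finally show "\<exists>c. v = lin_comb e n c" by blast
    next
      assume "\<exists>c. v = lin_comb e n c"
      then obtain c where "v = lin_comb e (Suc n) (c(n := 0))" using drop_last by metis
      then show "v \<in> {v \<in> H. coord e (Suc n) v n = 0}"
        using coord_lin_comb[OF B, of n "c(n := 0)"] basis_lin_comb_mem[OF B] by simp
    qed
  next
    fix c i assume "lin_comb e n c = 0" "i < n"
    then have "lin_comb e (Suc n) (c(n := 0)) = lin_comb e (Suc n) (\<lambda>_. 0)"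
      using drop_last by simp
    then show "c i = 0" using basis_unique[OF B, of "c(n := 0)" "\<lambda>_. 0" i] \<open>i < n\<close> by simp
  qed
qed

lemma int_subgrp_generator:
  fixes A :: "int set"
  assumes A: "subgrp A" and a: "a \<in> A" "a \<noteq> 0"
  obtains d where "d > 0" "d \<in> A" "\<And>b. b \<in> A \<Longrightarrow> d dvd b"
proof -
  define P where "P k \<longleftrightarrow> 0 < k \<and> int k \<in> A" for k
  have "P (nat \<bar>a\<bar>)"
    using a subgrp_uminus[OF A a(1)] unfolding P_def by (cases "a > 0") auto
  then have least: "P (LEAST k. P k)" by (rule LeastI)
  define d where "d = int (LEAST k. P k)"
  have dvd: "d dvd b" if b: "b \<in> A" for b
  proof -
    have "b - (b div d) * d \<in> A"
      using subgrp_diff[OF A b subgrp_zsc[OF A, of d "b div d"]] least unfolding P_def d_def by simp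
    then have "b mod d \<in> A" by (simp add: minus_div_mult_eq_mod)
    moreover have "0 \<le> b mod d" "b mod d < d" using least unfolding P_def d_def by simp_all
    ultimately have "b mod d = 0"
      using Least_le[of P "nat (b mod d)"] unfolding P_def d_def by fastforce
    then show ?thesis by (simp add: dvd_eq_mod_eq_0)
  qed
  show thesis by (rule that[of d]) (use least dvd in \<open>auto simp: P_def d_def\<close>)
qed

lemma basis_extend_kernel:
  fixes f :: "'a::ab_group_add \<Rightarrow> int"
  assumes S: "subgrp S" and f: "additive_on S f"
    and B: "is_basis e m {s \<in> S. f s = 0}"
    and s0: "s0 \<in> S" "f s0 = d" "d \<noteq> 0" and dvd: "\<And>s. s \<in> S \<Longrightarrow> d dvd f s"
  shows "is_basis (e(m := s0)) (Suc m) S"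
proof -
  have comb: "lin_comb (e(m := s0)) (Suc m) c = lin_comb e m c + zsc (c m) s0" for c
    by (simp add: lin_comb_Suc) (rule lin_comb_cong, auto)
  have kernel: "lin_comb e m c \<in> S" "f (lin_comb e m c) = 0" for c
    using basis_lin_comb_mem[OF B, of c] by simp_all
  have f_comb: "f (lin_comb (e(m := s0)) (Suc m) c) = c m * d" for c
    using comb kernel additive_on_add[OF S f] additive_on_zsc[OF S f s0(1)] subgrp_zsc[OF S s0(1)] s0(2)
    by simp
  show ?thesis
    unfolding is_basis_def
  proof (intro conjI allI impI)
    fix v
    show "v \<in> S \<longleftrightarrow> (\<exists>c. v = lin_comb (e(m := s0)) (Suc m) c)"
    proof
      assume v: "v \<in> S"
      define q where "q = f v div d"
      have "v - zsc q s0 \<in> {s \<in> S. f s = 0}"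
        using subgrp_diff[OF S v subgrp_zsc[OF S s0(1)]] additive_on_diff[OF S f v subgrp_zsc[OF S s0(1)]]
          additive_on_zsc[OF S f s0(1)] s0(2) dvd[OF v] unfolding q_def by simp
      then obtain c where "v - zsc q s0 = lin_comb e m c" using basis_span[OF B] by blast
      then have "v = lin_comb (e(m := s0)) (Suc m) (c(m := q))"
        using comb lin_comb_cong[of m "c(m := q)" c e e] by (simp add: algebra_simps)
      then show "\<exists>c. v = lin_comb (e(m := s0)) (Suc m) c" by blast
    next
      assume "\<exists>c. v = lin_comb (e(m := s0)) (Suc m) c"
      then show "v \<in> S" using comb kernel subgrp_add[OF S] subgrp_zsc[OF S s0(1)] by auto
    qed
  next
    fix c i assume c: "lin_comb (e(m := s0)) (Suc m) c = 0" and i: "i < Suc m"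
    have "c m = 0" using f_comb[of c] c additive_on_zero[OF S f] s0(3) by simp
    then have "lin_comb e m c = 0" using c comb by simp
    with \<open>c m = 0\<close> show "c i = 0" using B i less_Suc_eq unfolding is_basis_def by auto
  qed
qed

lemma subgrp_of_basis_has_basis:
  assumes "is_basis e n H" "subgrp S" "S \<subseteq> H"
  shows "\<exists>(e' :: nat \<Rightarrow> 'a::ab_group_add) m. is_basis e' m S"
  using assms
proof (induction n arbitrary: H S)
  case 0
  then have "S = {0}" using subgrp_zero[of S] unfolding is_basis_def lin_comb_def by auto
  then have "is_basis e 0 S" unfolding is_basis_def lin_comb_def by simp
  then show ?case by blast
next
  case (Suc n)
  define f where "f v = coord e (Suc n) v n" for v
  have f: "additive_on S f"
    using additive_on_coord[OF Suc.prems(1), of n] Suc.prems(3) unfolding f_def additive_on_def by blast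
  obtain e' m where B': "is_basis e' m {s \<in> S. f s = 0}"
  proof -
    have "{s \<in> S. f s = 0} \<subseteq> {v \<in> H. coord e (Suc n) v n = 0}" using Suc.prems(3) f_def by auto
    with Suc.IH[OF basis_Suc_kernel_last_coord[OF Suc.prems(1)] subgrp_kernel[OF Suc.prems(2) f]]
    show thesis using that by blast
  qed
  show ?case
  proof (cases "\<forall>s\<in>S. f s = 0")
    case True
    then have "{s \<in> S. f s = 0} = S" by blast
    then show ?thesis using B' by auto
  next
    case False
    then obtain s where "s \<in> S" "f s \<noteq> 0" by blast
    then obtain d where d: "d > 0" "d \<in> f ` S" "\<And>b. b \<in> f ` S \<Longrightarrow> d dvd b"
      using int_subgrp_generator[OF subgrp_image[OF Suc.prems(2) f], of "f s"] by blast
    then obtain s0 where "s0 \<in> S" "f s0 = d" by blast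
    then show ?thesis
      using basis_extend_kernel[OF Suc.prems(2) f B', of s0 d] d(1,3) by auto
  qed
qed

lemma fg_free_subgrp: "fg_free H \<Longrightarrow> subgrp S \<Longrightarrow> S \<subseteq> H \<Longrightarrow> fg_free S"
  using subgrp_of_basis_has_basis fg_free_iff_basis by metis

lemma dual_additive_on: "x \<in> dual S \<Longrightarrow> additive_on S x"
  by (simp add: dual_def additive_on_def)

lemma dual_outside: "x \<in> dual S \<Longrightarrow> w \<notin> S \<Longrightarrow> x w = 0"
  by (simp add: dual_def)

lemma dual_of_mem_dual: "subgrp S \<Longrightarrow> additive_on S f \<Longrightarrow> dual_of S f \<in> dual S"
  by (auto simp: dual_def dual_of_def additive_on_def subgrp_add)

lemma dual_add: "x \<in> dual S \<Longrightarrow> y \<in> dual S \<Longrightarrow> x + y \<in> dual S"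
  by (simp add: dual_def)

lemma dual_scale: "x \<in> dual S \<Longrightarrow> (\<lambda>w. r * x w) \<in> dual S"
  by (simp add: dual_def distrib_left)

lemma dual_eqI: "x \<in> dual S \<Longrightarrow> y \<in> dual S \<Longrightarrow> (\<And>w. w \<in> S \<Longrightarrow> x w = y w) \<Longrightarrow> x = y"
  by (rule ext) (metis dual_outside)

lemma dual_eq_on_basis:
  assumes B: "is_basis e m S" and x: "x \<in> dual S" and y: "y \<in> dual S"
    and xy: "\<And>j. j < m \<Longrightarrow> x (e j) = y (e j)"
  shows "x = y"
proof (rule dual_eqI[OF x y])
  fix w assume "w \<in> S"
  then obtain c where "w = lin_comb e m c" using basis_span[OF B] by blast
  then show "x w = y w"
    using additive_on_lin_comb[OF basis_subgrp[OF B] dual_additive_on[OF x] basis_mem[OF B]]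
      additive_on_lin_comb[OF basis_subgrp[OF B] dual_additive_on[OF y] basis_mem[OF B]] xy by simp
qed

lemma adj_inside [simp]: "w \<in> T \<Longrightarrow> adj T lm v w = lm v w"
  and adj_outside [simp]: "w \<notin> T \<Longrightarrow> adj T lm v w = 0"
  by (simp_all add: adj_def dual_of_def)

definition gram_mat :: "('a \<Rightarrow> 'a \<Rightarrow> int) \<Rightarrow> (nat \<Rightarrow> 'a) \<Rightarrow> nat \<Rightarrow> int mat" where
  "gram_mat lm e m = mat m m (\<lambda>(i, j). lm (e i) (e j))"

lemma gram_mat_carrier [simp]: "gram_mat lm e m \<in> carrier_mat m m"
  by (simp add: gram_mat_def)

locale sym_form =
  fixes S :: "'a::ab_group_add set" and lm :: "'a \<Rightarrow> 'a \<Rightarrow> int"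
  assumes subgrp: "subgrp S"
    and sym: "v \<in> S \<Longrightarrow> w \<in> S \<Longrightarrow> lm v w = lm w v"
    and add_left: "u \<in> S \<Longrightarrow> v \<in> S \<Longrightarrow> w \<in> S \<Longrightarrow> lm (u + v) w = lm u w + lm v w"
begin

lemma additive_on_left: "w \<in> S \<Longrightarrow> additive_on S (\<lambda>u. lm u w)"
  by (simp add: additive_on_def add_left)

lemma additive_on_right: "v \<in> S \<Longrightarrow> additive_on S (lm v)"
  unfolding additive_on_def using add_left sym subgrp_add[OF subgrp] by metis

lemma zsc_left: "v \<in> S \<Longrightarrow> w \<in> S \<Longrightarrow> lm (zsc k v) w = k * lm v w"
  using additive_on_zsc[OF subgrp additive_on_left] by simp

lemma zsc_right: "v \<in> S \<Longrightarrow> w \<in> S \<Longrightarrow> lm v (zsc k w) = k * lm v w"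
  using additive_on_zsc[OF subgrp additive_on_right] by simp

lemma diff_left: "u \<in> S \<Longrightarrow> v \<in> S \<Longrightarrow> w \<in> S \<Longrightarrow> lm (u - v) w = lm u w - lm v w"
  using additive_on_diff[OF subgrp additive_on_left] by simp

lemma add_right: "v \<in> S \<Longrightarrow> u \<in> S \<Longrightarrow> w \<in> S \<Longrightarrow> lm v (u + w) = lm v u + lm v w"
  using additive_on_add[OF subgrp additive_on_right] by simp

context
  fixes T assumes T: "T \<subseteq> S"
begin

lemma adj_add: "u \<in> S \<Longrightarrow> v \<in> S \<Longrightarrow> adj T lm (u + v) = adj T lm u + adj T lm v"
  using T by (auto simp: fun_eq_iff add_left adj_def dual_of_def)

lemma adj_diff: "u \<in> S \<Longrightarrow> v \<in> S \<Longrightarrow> adj T lm (u - v) = adj T lm u - adj T lm v"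
  using T by (auto simp: fun_eq_iff diff_left adj_def dual_of_def)

lemma adj_zsc: "v \<in> S \<Longrightarrow> adj T lm (zsc k v) = (\<lambda>w. k * adj T lm v w)"
  using T by (auto simp: fun_eq_iff zsc_left adj_def dual_of_def)

lemma adj_uminus: "u \<in> S \<Longrightarrow> adj T lm (- u) = - adj T lm u"
  using T zsc_left[of u _ "-1"] by (auto simp: fun_eq_iff adj_def dual_of_def zsc_uminus_left)

lemma adj_zero: "adj T lm 0 = 0"
  using T zsc_left[of 0 _ 0] subgrp_zero[OF subgrp] by (auto simp: fun_eq_iff adj_def dual_of_def)

lemma adj_mem_dual: "subgrp T \<Longrightarrow> v \<in> S \<Longrightarrow> adj T lm v \<in> dual T"
  unfolding adj_def using T additive_on_right
  by (intro dual_of_mem_dual) (auto simp: additive_on_def)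

end

lemma cls_mem: "x \<in> dual S \<Longrightarrow> y \<in> cls S lm x \<longleftrightarrow> (\<exists>u\<in>S. y = x + adj S lm u)"
  unfolding cls_def using dual_add adj_mem_dual subgrp by blast

lemma cls_self: "x \<in> dual S \<Longrightarrow> x \<in> cls S lm x"
  using cls_mem[of x x] subgrp_zero[OF subgrp] adj_zero by force

lemma cls_eq_iff:
  assumes x: "x \<in> dual S" and y: "y \<in> dual S"
  shows "cls S lm x = cls S lm y \<longleftrightarrow> (\<exists>u\<in>S. x = y + adj S lm u)"
proof
  assume "cls S lm x = cls S lm y"
  then show "\<exists>u\<in>S. x = y + adj S lm u" using cls_self[OF x] cls_mem[OF y] by blast
next
  assume "\<exists>u\<in>S. x = y + adj S lm u"
  then obtain u where u: "u \<in> S" "x = y + adj S lm u" by blast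
  have "z \<in> cls S lm x \<longleftrightarrow> z \<in> cls S lm y" for z
  proof
    assume "z \<in> cls S lm x"
    then obtain u' where "u' \<in> S" "z = x + adj S lm u'" using cls_mem[OF x] by blast
    then have "u + u' \<in> S" "z = y + adj S lm (u + u')"
      using u adj_add subgrp_add[OF subgrp] by (simp_all add: add.assoc)
    then show "z \<in> cls S lm y" using cls_mem[OF y] by blast
  next
    assume "z \<in> cls S lm y"
    then obtain u' where "u' \<in> S" "z = y + adj S lm u'" using cls_mem[OF y] by blast
    then have "u' - u \<in> S" "z = x + adj S lm (u' - u)"
      using u adj_diff subgrp_diff[OF subgrp] by (simp_all add: algebra_simps)
    then show "z \<in> cls S lm x" using cls_mem[OF x] by blast
  qed
  then show "cls S lm x = cls S lm y" by blast
qed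

lemma cls_of_mem: "x \<in> dual S \<Longrightarrow> y \<in> cls S lm x \<Longrightarrow> cls S lm y = cls S lm x"
  using cls_eq_iff cls_mem unfolding cls_def by blast

lemma cls_add:
  assumes x: "x \<in> dual S" and y: "y \<in> dual S"
  shows "{a + b |a b. a \<in> cls S lm x \<and> b \<in> cls S lm y} = cls S lm (x + y)"
proof (rule Set.set_eqI, rule iffI)
  fix z assume "z \<in> {a + b |a b. a \<in> cls S lm x \<and> b \<in> cls S lm y}"
  then obtain a b where z: "z = a + b" and "a \<in> cls S lm x" "b \<in> cls S lm y" by blast
  then obtain u u' where "u \<in> S" "u' \<in> S" "a = x + adj S lm u" "b = y + adj S lm u'"
    using cls_mem[OF x] cls_mem[OF y] by meson
  then have "u + u' \<in> S" "z = (x + y) + adj S lm (u + u')"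
    using z adj_add[OF order_refl] subgrp_add[OF subgrp] by (simp_all add: algebra_simps)
  then show "z \<in> cls S lm (x + y)" using cls_mem[OF dual_add[OF x y]] by blast
next
  fix z assume "z \<in> cls S lm (x + y)"
  then obtain u where "u \<in> S" "z = (x + adj S lm u) + y"
    using cls_mem[OF dual_add[OF x y]] by (auto simp: algebra_simps)
  moreover have "x + adj S lm u \<in> cls S lm x" using cls_mem[OF x] \<open>u \<in> S\<close> by blast
  moreover have "y \<in> cls S lm y" using cls_self[OF y] .
  ultimately show "z \<in> {a + b |a b. a \<in> cls S lm x \<and> b \<in> cls S lm y}" by blast
qed

text \<open>Nondegeneracy determines v from r x = adj v up to the scaling r, so y v / r is well defined.\<close>
lemma linv_eq:
  assumes nd: "nondeg S lm" and r: "r \<noteq> 0" and v: "v \<in> S" and xv: "(\<lambda>w. r * x w) = adj S lm v"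
    and y: "y \<in> dual S"
  shows "linv S lm x y = of_int (y v) / of_int r"
  unfolding linv_def
proof (rule the_equality)
  fix q :: rat
  assume "\<exists>v'\<in>S. \<exists>r'. r' \<noteq> 0 \<and> (\<lambda>w. r' * x w) = adj S lm v' \<and> q = of_int (y v') / of_int r'"
  then obtain v' r' where v': "v' \<in> S" "r' \<noteq> 0" "(\<lambda>w. r' * x w) = adj S lm v'"
    and q: "q = of_int (y v') / of_int r'" by blast
  have "adj S lm (zsc r v') w = adj S lm (zsc r' v) w" for w
  proof -
    have "adj S lm (zsc r v') w = r * (r' * x w)"
      using adj_zsc[OF order_refl v'(1), of r] fun_cong[OF v'(3), of w] by simp
    also have "\<dots> = r' * (r * x w)" by simp
    also have "\<dots> = adj S lm (zsc r' v) w"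
      using adj_zsc[OF order_refl v, of r'] fun_cong[OF xv, of w] by simp
    finally show ?thesis .
  qed
  then have "adj S lm (zsc r v' - zsc r' v) = 0"
    using adj_diff[OF order_refl subgrp_zsc[OF subgrp v'(1)] subgrp_zsc[OF subgrp v]] by (simp add: fun_eq_iff)
  moreover have "zsc r v' - zsc r' v \<in> S"
    using subgrp_diff[OF subgrp] subgrp_zsc[OF subgrp] v v'(1) by blast
  ultimately have "zsc r v' - zsc r' v = 0" using nd unfolding nondeg_def by blast
  then have "zsc r v' = zsc r' v" by simp
  then have "r * y v' = r' * y v"
    using additive_on_zsc[OF subgrp dual_additive_on[OF y] v'(1), of r]
      additive_on_zsc[OF subgrp dual_additive_on[OF y] v, of r'] by simp
  then have "of_int r * of_int (y v') = (of_int r' * of_int (y v) :: rat)" by (metis of_int_mult)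
  then show "q = of_int (y v) / of_int r" using q r v'(2) by (simp add: frac_eq_eq algebra_simps)
qed (use r v xv in blast)

lemma sym_form_neg_form: "sym_form S (neg_form lm)"
  by unfold_locales (auto simp: neg_form_def subgrp sym add_left)

lemma adj_neg_form: "adj T (neg_form lm) u = - adj T lm u"
  by (simp add: fun_eq_iff adj_def dual_of_def neg_form_def)

lemma cls_neg_form: "cls S (neg_form lm) x = cls S lm x"
proof -
  have "(\<exists>v\<in>S. y = x + adj S (neg_form lm) v) \<longleftrightarrow> (\<exists>v\<in>S. y = x + adj S lm v)" for y
  proof
    assume "\<exists>v\<in>S. y = x + adj S (neg_form lm) v"
    then obtain v where "v \<in> S" "y = x + adj S lm (- v)"
      using adj_neg_form adj_uminus[OF order_refl] by auto
    then show "\<exists>v\<in>S. y = x + adj S lm v" using subgrp_uminus[OF subgrp] by blast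
  next
    assume "\<exists>v\<in>S. y = x + adj S lm v"
    then obtain v where "v \<in> S" "y = x + adj S (neg_form lm) (- v)"
      using adj_neg_form adj_uminus[OF order_refl] by auto
    then show "\<exists>v\<in>S. y = x + adj S (neg_form lm) v" using subgrp_uminus[OF subgrp] by blast
  qed
  then show ?thesis unfolding cls_def by blast
qed

lemma sym_form_subgrp: "subgrp T \<Longrightarrow> T \<subseteq> S \<Longrightarrow> sym_form T lm"
  by unfold_locales (auto intro: sym add_left)

lemma cls_adj_eq_iff:
  assumes T: "subgrp T" "T \<subseteq> S" and v: "v \<in> S" and w: "w \<in> S"
  shows "cls T lm (adj T lm v) = cls T lm (adj T lm w) \<longleftrightarrow> (\<exists>u\<in>T. adj T lm (v - w - u) = 0)"
proof -
  interpret T: sym_form T lm by (rule sym_form_subgrp[OF T])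
  have "adj T lm (v - w - u) = adj T lm v - (adj T lm w + adj T lm u)" if "u \<in> T" for u
    using that T(2) adj_diff[OF T(2)] subgrp_diff[OF subgrp] v w by auto
  then show ?thesis
    using T.cls_eq_iff[OF adj_mem_dual[OF T(2,1) v] adj_mem_dual[OF T(2,1) w]]
    by (simp add: eq_diff_eq' diff_eq_eq)
qed

lemma gram_mult_vec:
  assumes B: "is_basis e m S" and j: "j < m" and c: "c \<in> carrier_vec m"
  shows "(gram_mat lm e m *\<^sub>v c) $ j = lm (lin_comb e m (\<lambda>i. c $ i)) (e j)"
proof -
  have "(gram_mat lm e m *\<^sub>v c) $ j = (\<Sum>i<m. c $ i * lm (e i) (e j))"
    using j c sym basis_mem[OF B] by (auto simp: gram_mat_def scalar_prod_def atLeast0LessThan intro: sum.cong)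
  also have "\<dots> = lm (lin_comb e m (\<lambda>i. c $ i)) (e j)"
    using additive_on_lin_comb[OF subgrp additive_on_left[OF basis_mem[OF B j]] basis_mem[OF B]] by simp
  finally show ?thesis .
qed

lemma det_gram_nonzero:
  assumes B: "is_basis e m S" and nd: "nondeg S lm"
  shows "det (gram_mat lm e m) \<noteq> 0"
proof
  assume "det (gram_mat lm e m) = 0"
  then obtain c where c: "c \<in> carrier_vec m" "c \<noteq> 0\<^sub>v m" "gram_mat lm e m *\<^sub>v c = 0\<^sub>v m"
    using det_0_iff_vec_prod_zero[OF gram_mat_carrier] by blast
  define u where "u = lin_comb e m (\<lambda>i. c $ i)"
  have "adj S lm u = 0"
  proof (rule dual_eq_on_basis[OF B])
    show "adj S lm u \<in> dual S" using adj_mem_dual[OF order_refl subgrp] basis_lin_comb_mem[OF B] u_def by simp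
    show "0 \<in> dual S" by (simp add: dual_def)
    fix j assume "j < m"
    then show "adj S lm u (e j) = 0 (e j)"
      using gram_mult_vec[OF B _ c(1)] c(3) basis_mem[OF B] u_def by simp
  qed
  then have "lin_comb e m (\<lambda>i. c $ i) = lin_comb e m (\<lambda>_. 0)"
    using nd basis_lin_comb_mem[OF B] unfolding nondeg_def u_def by simp
  from basis_unique[OF B this] have "c = 0\<^sub>v m" using c(1) by (intro eq_vecI) auto
  with c(2) show False by contradiction
qed

text \<open>r = det G: the adjugate of the Gram matrix G inverts G up to that factor.\<close>
lemma nondeg_scaled_dual_in_adj_image:
  assumes B: "is_basis e m S" and nd: "nondeg S lm" and x: "x \<in> dual S"
  obtains r v where "r \<noteq> 0" "v \<in> S" "(\<lambda>w. r * x w) = adj S lm v"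
proof -
  define G where "G = gram_mat lm e m"
  define y where "y = vec m (\<lambda>j. x (e j))"
  define c where "c = adj_mat G *\<^sub>v y"
  have G: "G \<in> carrier_mat m m" and y: "y \<in> carrier_vec m" unfolding G_def y_def by simp_all
  have c: "c \<in> carrier_vec m" unfolding c_def using adj_mat(1)[OF G] y by simp
  have "G *\<^sub>v c = (det G \<cdot>\<^sub>m 1\<^sub>m m) *\<^sub>v y"
    unfolding c_def using adj_mat(1,2)[OF G] G y by (simp flip: assoc_mult_mat_vec)
  also have "\<dots> = det G \<cdot>\<^sub>v y"
  proof (rule eq_vecI)
    fix i assume "i < dim_vec (det G \<cdot>\<^sub>v y)"
    moreover have "(\<Sum>k = 0..<m. det G * (if k = i then 1 else 0) * y $ k)
        = (\<Sum>k = 0..<m. if k = i then det G * y $ k else 0)"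
      by (rule sum.cong) auto
    ultimately show "((det G \<cdot>\<^sub>m 1\<^sub>m m) *\<^sub>v y) $ i = (det G \<cdot>\<^sub>v y) $ i"
      using y by (simp add: scalar_prod_def)
  qed (use y in simp)
  finally have Gc: "G *\<^sub>v c = det G \<cdot>\<^sub>v y" .
  define v where "v = lin_comb e m (\<lambda>i. c $ i)"
  have v: "v \<in> S" unfolding v_def using basis_lin_comb_mem[OF B] .
  have "adj S lm v = (\<lambda>w. det G * x w)"
  proof (rule dual_eq_on_basis[OF B adj_mem_dual[OF order_refl subgrp v] dual_scale[OF x]])
    fix j assume j: "j < m"
    have "adj S lm v (e j) = (G *\<^sub>v c) $ j"
      using gram_mult_vec[OF B j c] basis_mem[OF B j] unfolding G_def v_def by simp
    also have "\<dots> = det G * x (e j)" using Gc j y unfolding y_def by simp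
    finally show "adj S lm v (e j) = det G * x (e j)" .
  qed
  then show thesis using that[of "det G" v] det_gram_nonzero[OF B nd] v unfolding G_def by simp
qed

end

lemma direct_summand_projection:
  assumes "direct_summand S H"
  obtains p where "\<And>w. w \<in> H \<Longrightarrow> p w \<in> S" "\<And>w. w \<in> S \<Longrightarrow> p w = w" "additive_on H p"
proof -
  obtain K where S: "subgrp S" and K: "subgrp K" "S \<inter> K = {0}" "\<forall>v\<in>H. \<exists>a\<in>S. \<exists>b\<in>K. v = a + b"
    using assms unfolding direct_summand_def by blast
  define p where "p w = (THE a. a \<in> S \<and> (\<exists>b\<in>K. w = a + b))" for w
  have p_eq: "p (a + b) = a" if ab: "a \<in> S" "b \<in> K" for a b
    unfolding p_def
  proof (rule the_equality)
    fix a' assume "a' \<in> S \<and> (\<exists>b'\<in>K. a + b = a' + b')"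
    then obtain b' where "a' \<in> S" "b' \<in> K" "a - a' = b' - b" by (auto simp: algebra_simps)
    moreover have "a - a' \<in> S" "b' - b \<in> K" using subgrp_diff[OF S] subgrp_diff[OF K(1)] ab \<open>a' \<in> S\<close> \<open>b' \<in> K\<close> by auto
    ultimately have "a - a' \<in> S \<inter> K" by simp
    then show "a' = a" using K(2) by auto
  qed (use ab in blast)
  show thesis
  proof (rule that)
    show "p w \<in> S" if "w \<in> H" for w using K(3) that p_eq by force
    show "p w = w" if "w \<in> S" for w using p_eq[OF that subgrp_zero[OF K(1)]] by simp
    show "additive_on H p" unfolding additive_on_def
    proof (intro ballI)
      fix v w assume "v \<in> H" "w \<in> H"
      then obtain a b a' b' where ab: "a \<in> S" "b \<in> K" "v = a + b" "a' \<in> S" "b' \<in> K" "w = a' + b'"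
        using K(3) by meson
      have "p (v + w) = p ((a + a') + (b + b'))" using ab(3,6) by (simp add: algebra_simps)
      also have "\<dots> = a + a'" using ab p_eq subgrp_add[OF S] subgrp_add[OF K(1)] by simp
      finally show "p (v + w) = p v + p w" using ab p_eq by simp
    qed
  qed
qed

lemma direct_summand_dual_extend:
  assumes ds: "direct_summand S H" and H: "subgrp H" and x: "x \<in> dual S"
  obtains x' where "x' \<in> dual H" "\<And>w. w \<in> S \<Longrightarrow> x' w = x w"
proof -
  obtain p where p: "\<And>w. w \<in> H \<Longrightarrow> p w \<in> S" "\<And>w. w \<in> S \<Longrightarrow> p w = w" "additive_on H p"
    using direct_summand_projection[OF ds] by blast
  have "additive_on H (\<lambda>w. x (p w))"
    using p additive_on_add[OF H p(3)] dual_additive_on[OF x] unfolding additive_on_def by simp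
  then have "dual_of H (\<lambda>w. x (p w)) \<in> dual H" by (rule dual_of_mem_dual[OF H])
  moreover have "S \<subseteq> H" using ds unfolding direct_summand_def by blast
  ultimately show thesis using that[of "dual_of H (\<lambda>w. x (p w))"] p(2) by (auto simp: dual_of_def subset_iff)
qed

lemma nonsing_adj_restrict_surj:
  assumes ds: "direct_summand S H" and H: "subgrp H" and ns: "nonsing H lm" and x: "x \<in> dual S"
  obtains v where "v \<in> H" "adj S lm v = x"
proof -
  obtain x' where x': "x' \<in> dual H" "\<And>w. w \<in> S \<Longrightarrow> x' w = x w"
    using direct_summand_dual_extend[OF ds H x] by blast
  then obtain v where v: "v \<in> H" "adj H lm v = x'" using ns unfolding nonsing_def by blast
  have "S \<subseteq> H" using ds unfolding direct_summand_def by blast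
  then have "adj S lm v w = x w" for w
    using fun_cong[OF v(2), of w] x'(2) dual_outside[OF x] by (cases "w \<in> S") auto
  then show thesis using that v(1) by blast
qed

lemma direct_summand_saturated:
  assumes ds: "direct_summand S H" and H: "fg_free H" and w: "w \<in> H" and r: "r \<noteq> 0"
    and rw: "zsc r w \<in> S"
  shows "w \<in> S"
proof -
  obtain K where S: "subgrp S" and K: "subgrp K" "K \<subseteq> H" "S \<inter> K = {0}" "\<forall>v\<in>H. \<exists>a\<in>S. \<exists>b\<in>K. v = a + b"
    using ds unfolding direct_summand_def by blast
  obtain a b where ab: "a \<in> S" "b \<in> K" "w = a + b" using K(4) w by blast
  have "zsc r b = zsc r w - zsc r a" using ab(3) by (simp add: zsc_add_right)
  then have "zsc r b \<in> S" using subgrp_diff[OF S rw subgrp_zsc[OF S ab(1)]] by simp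
  moreover have "zsc r b \<in> K" using subgrp_zsc[OF K(1) ab(2)] .
  ultimately have "zsc r b = 0" using K(3) by blast
  moreover obtain e n where "is_basis e n H" using H fg_free_iff_basis by blast
  ultimately have "b = 0" using basis_torsion_free r ab(2) K(2) by blast
  then show ?thesis using ab by simp
qed

lemma subgrp_common_kernel:
  assumes H: "subgrp H" and f: "\<And>j. j < m \<Longrightarrow> additive_on H (f j)"
  shows "subgrp {v \<in> H. \<forall>j<m. f j v = 0}"
  unfolding subgrp_def
proof (intro conjI ballI)
  show "0 \<in> {v \<in> H. \<forall>j<m. f j v = 0}" using subgrp_zero[OF H] additive_on_zero[OF H f] by simp
  fix x y assume x: "x \<in> {v \<in> H. \<forall>j<m. f j v = 0}" and y: "y \<in> {v \<in> H. \<forall>j<m. f j v = 0}"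
  then show "x + y \<in> {v \<in> H. \<forall>j<m. f j v = 0}"
    using subgrp_add[OF H] additive_on_add[OF H f] by simp
  show "- x \<in> {v \<in> H. \<forall>j<m. f j v = 0}"
    using x subgrp_uminus[OF H] additive_on_uminus[OF H f] by simp
qed

lemma subgrp_range_lin_comb: "subgrp (range (lin_comb W m))"
  unfolding subgrp_def
proof (intro conjI ballI)
  show "0 \<in> range (lin_comb W m)" by (rule range_eqI[where x = "\<lambda>_. 0"]) simp
  fix x y assume "x \<in> range (lin_comb W m)" "y \<in> range (lin_comb W m)"
  then obtain c d where "x = lin_comb W m c" "y = lin_comb W m d" by blast
  then show "x + y \<in> range (lin_comb W m)" "- x \<in> range (lin_comb W m)"
    using range_eqI[of _ "lin_comb W m", OF lin_comb_add[of W m c d, symmetric]]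
      range_eqI[of _ "lin_comb W m", OF lin_comb_uminus[of W m c, symmetric]] by simp_all
qed

lemma dual_family_lin_comb:
  fixes f :: "nat \<Rightarrow> 'a::ab_group_add \<Rightarrow> int"
  assumes H: "subgrp H" and f: "\<And>j. j < m \<Longrightarrow> additive_on H (f j)" and W: "\<And>j. j < m \<Longrightarrow> W j \<in> H"
    and fW: "\<And>i j. i < m \<Longrightarrow> j < m \<Longrightarrow> f i (W j) = (if i = j then 1 else 0)" and i: "i < m"
  shows "f i (lin_comb W m c) = c i"
proof -
  have "f i (lin_comb W m c) = (\<Sum>j<m. c j * f i (W j))"
    using additive_on_lin_comb[OF H f[OF i], where e = W and n = m] W by blast
  also have "\<dots> = (\<Sum>j<m. if j = i then c j else 0)"
    by (rule sum.cong) (auto simp: fW i)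
  finally show ?thesis using i by simp
qed

lemma direct_summand_common_kernel:
  fixes f :: "nat \<Rightarrow> 'a::ab_group_add \<Rightarrow> int"
  assumes H: "subgrp H" and f: "\<And>j. j < m \<Longrightarrow> additive_on H (f j)" and W: "\<And>j. j < m \<Longrightarrow> W j \<in> H"
    and fW: "\<And>i j. i < m \<Longrightarrow> j < m \<Longrightarrow> f i (W j) = (if i = j then 1 else 0)"
  shows "direct_summand {v \<in> H. \<forall>j<m. f j v = 0} H"
proof -
  define K where "K = range (lin_comb W m)"
  have comb_mem: "lin_comb W m c \<in> H" for c
    using subgrp_lin_comb[OF H, of m W] W by blast
  have f_comb: "f i (lin_comb W m c) = c i" if "i < m" for i c
    using dual_family_lin_comb[OF H f W fW that] .
  have kernel: "subgrp {v \<in> H. \<forall>j<m. f j v = 0}" by (rule subgrp_common_kernel[OF H f])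
  have "subgrp K" unfolding K_def by (rule subgrp_range_lin_comb)
  moreover have "K \<subseteq> H" unfolding K_def using comb_mem by blast
  moreover have "{v \<in> H. \<forall>j<m. f j v = 0} \<inter> K = {0}"
  proof (intro equalityI subsetI)
    fix v assume "v \<in> {v \<in> H. \<forall>j<m. f j v = 0} \<inter> K"
    then obtain c where "v = lin_comb W m c" "\<forall>j<m. c j = 0" unfolding K_def using f_comb by auto
    then show "v \<in> {0}" using lin_comb_cong[of m c "\<lambda>_. 0" W W] by simp
  qed (use kernel \<open>subgrp K\<close> subgrp_zero in blast)
  moreover have "\<exists>a\<in>{v \<in> H. \<forall>j<m. f j v = 0}. \<exists>b\<in>K. v = a + b" if v: "v \<in> H" for v
  proof -
    define k where "k = lin_comb W m (\<lambda>j. f j v)"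
    have k: "k \<in> K" "k \<in> H" unfolding k_def K_def using comb_mem by auto
    then have "v - k \<in> {v \<in> H. \<forall>j<m. f j v = 0}"
      using subgrp_diff[OF H v] additive_on_diff[OF H f v comb_mem] f_comb unfolding k_def by auto
    moreover have "v = (v - k) + k" by simp
    ultimately show ?thesis using k by blast
  qed
  ultimately show ?thesis unfolding direct_summand_def using kernel by blast
qed


locale nondeg_summand =
  fixes F :: family and H H0 :: "'v::ab_group_add set" and lam :: "'v \<Rightarrow> 'v \<Rightarrow> int"
    and alpha :: "'v \<Rightarrow> int" and H1 :: "'v set"
  assumes family: "in_family F H lam alpha" and nonsing: "nonsing H lam"
    and summand: "direct_summand H0 H" and nondeg_H0: "nondeg H0 lam"
    and H1_def: "H1 = {v \<in> H. \<forall>v0\<in>H0. lam v v0 = 0}"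
begin

lemma fg_free_H: "fg_free H"
  using family by (simp add: in_family_def is_qf_def)

lemma subgrp_H: "subgrp H"
  using fg_free_H basis_subgrp fg_free_iff_basis by metis

interpretation form: sym_form H lam
  using family subgrp_H by unfold_locales (auto simp: in_family_def is_qf_def)

lemma subgrp_H0: "subgrp H0" and H0_subset: "H0 \<subseteq> H"
  using summand by (simp_all add: direct_summand_def)

lemma basis_H0: obtains e m where "is_basis e m H0"
  using fg_free_subgrp[OF fg_free_H subgrp_H0 H0_subset] fg_free_iff_basis by blast

lemma H1_subset: "H1 \<subseteq> H"
  by (simp add: H1_def)

lemma adj_H0_eq_0_iff: "v \<in> H \<Longrightarrow> adj H0 lam v = 0 \<longleftrightarrow> v \<in> H1"
  by (auto simp: H1_def fun_eq_iff adj_def dual_of_def)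

lemma subgrp_H1: "subgrp H1"
proof -
  have "additive_on H (adj H0 lam)"
    using form.adj_add[OF H0_subset] by (simp add: additive_on_def)
  moreover have "H1 = {v \<in> H. adj H0 lam v = 0}" using adj_H0_eq_0_iff H1_subset by blast
  ultimately show ?thesis using subgrp_kernel[OF subgrp_H] by simp
qed

lemma adj_H1_of_H0: "u \<in> H0 \<Longrightarrow> adj H1 lam u = 0"
  using H0_subset H1_subset form.sym by (auto simp: H1_def fun_eq_iff adj_def dual_of_def)

interpretation form0: sym_form H0 lam
  by (rule form.sym_form_subgrp[OF subgrp_H0 H0_subset])

interpretation form1: sym_form H1 lam
  by (rule form.sym_form_subgrp[OF subgrp_H1 H1_subset])

interpretation form1_neg: sym_form H1 "neg_form lam"
  by (rule form1.sym_form_neg_form)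

lemma multiple_splits:
  assumes v: "v \<in> H"
  obtains r a0 a1 where "r \<noteq> 0" "a0 \<in> H0" "a1 \<in> H1" "zsc r v = a0 + a1"
proof -
  obtain e m where "is_basis e m H0" by (rule basis_H0)
  then obtain r a0 where r: "r \<noteq> 0" "a0 \<in> H0" "(\<lambda>w. r * adj H0 lam v w) = adj H0 lam a0"
    using form0.nondeg_scaled_dual_in_adj_image[OF _ nondeg_H0 form.adj_mem_dual[OF H0_subset subgrp_H0 v]]
    by blast
  have a0: "a0 \<in> H" using r(2) H0_subset by blast
  have "adj H0 lam (zsc r v - a0) = 0"
    using form.adj_diff[OF H0_subset subgrp_zsc[OF subgrp_H v] a0] form.adj_zsc[OF H0_subset v] r(3)
    by simp
  then have "zsc r v - a0 \<in> H1"
    using adj_H0_eq_0_iff subgrp_diff[OF subgrp_H subgrp_zsc[OF subgrp_H v] a0] by blast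
  then show thesis using that[OF r(1,2)] by force
qed

lemma adj_H0_H1_zero_imp_zero:
  assumes v: "v \<in> H" and "adj H0 lam v = 0" "adj H1 lam v = 0"
  shows "v = 0"
proof -
  have "lam v w = 0" if w: "w \<in> H" for w
  proof -
    obtain r a0 a1 where ra: "r \<noteq> 0" "a0 \<in> H0" "a1 \<in> H1" "zsc r w = a0 + a1"
      using multiple_splits[OF w] by blast
    have "lam v a0 = 0" "lam v a1 = 0"
      using assms(2,3) ra(2,3) by (metis adj_inside zero_fun_apply)+
    moreover have "lam v (a0 + a1) = lam v a0 + lam v a1"
      using form.add_right[OF v] ra(2,3) H0_subset H1_subset by blast
    ultimately have "r * lam v w = 0"
      using form.zsc_right[OF v w, of r] ra(4) by simp
    then show ?thesis using ra(1) by simp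
  qed
  then have "adj H lam v = 0" by (auto simp: fun_eq_iff adj_def dual_of_def)
  then show ?thesis using nonsing v unfolding nonsing_def nondeg_def by blast
qed

lemma adj_H1_eq_0_iff:
  assumes v: "v \<in> H"
  shows "adj H1 lam v = 0 \<longleftrightarrow> v \<in> H0"
proof
  assume z: "adj H1 lam v = 0"
  obtain r b0 b1 where rb: "r \<noteq> 0" "b0 \<in> H0" "b1 \<in> H1" "zsc r v = b0 + b1"
    using multiple_splits[OF v] by blast
  have b: "b0 \<in> H" "b1 \<in> H" using rb H0_subset H1_subset by blast+
  have "adj H1 lam b0 + adj H1 lam b1 = 0"
    using form.adj_zsc[OF H1_subset v, of r] z rb(4) form.adj_add[OF H1_subset b] by (simp add: fun_eq_iff)
  then have "adj H1 lam b1 = 0" using adj_H1_of_H0[OF rb(2)] by simp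
  then have "b1 = 0" using adj_H0_H1_zero_imp_zero b(2) adj_H0_eq_0_iff rb(3) by blast
  then show "v \<in> H0"
    using direct_summand_saturated[OF summand fg_free_H v rb(1)] rb(2,4) by simp
qed (rule adj_H1_of_H0)

lemma H1_eq_common_kernel:
  assumes B: "is_basis e m H0"
  shows "H1 = {v \<in> H. \<forall>j<m. lam v (e j) = 0}"
proof -
  have "v \<in> H1" if v: "v \<in> H" "\<forall>j<m. lam v (e j) = 0" for v
  proof -
    have "adj H0 lam v = 0"
      using dual_eq_on_basis[OF B form.adj_mem_dual[OF H0_subset subgrp_H0 v(1)], of 0] v(2) basis_mem[OF B]
      by (simp add: dual_def)
    then show ?thesis using adj_H0_eq_0_iff v(1) by blast
  qed
  then show ?thesis using basis_mem[OF B] by (auto simp: H1_def)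
qed

text \<open>The family W below is dual to the basis e of H0 under lam and spans a complement of H1.\<close>
lemma H1_direct_summand: "direct_summand H1 H"
proof -
  obtain e m where B: "is_basis e m H0" by (rule basis_H0)
  define coord_fun where "coord_fun j = dual_of H0 (\<lambda>u. coord e m u j)" for j
  define W where "W j = (SOME w. w \<in> H \<and> adj H0 lam w = coord_fun j)" for j
  have W: "W j \<in> H \<and> adj H0 lam (W j) = coord_fun j" if j: "j < m" for j
  proof -
    have "coord_fun j \<in> dual H0"
      unfolding coord_fun_def by (rule dual_of_mem_dual[OF subgrp_H0 additive_on_coord[OF B j]])
    then have "\<exists>w. w \<in> H \<and> adj H0 lam w = coord_fun j"
      using nonsing_adj_restrict_surj[OF summand subgrp_H nonsing] by metis
    then show ?thesis unfolding W_def by (rule someI_ex)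
  qed
  have "lam (W j) (e i) = (if i = j then 1 else 0)" if "i < m" "j < m" for i j
    using fun_cong[OF conjunct2[OF W[OF that(2)]], of "e i"] coord_basis[OF B that] basis_mem[OF B that(1)]
    unfolding coord_fun_def dual_of_def by auto
  moreover have "additive_on H (\<lambda>v. lam v (e j))" if "j < m" for j
    using form.additive_on_left basis_mem[OF B that] H0_subset by blast
  ultimately show ?thesis
    unfolding H1_eq_common_kernel[OF B]
    using direct_summand_common_kernel[OF subgrp_H, where f = "\<lambda>j v. lam v (e j)" and W = W] W
    by blast
qed

lemma family_H0: "in_family F H0 lam alpha"
proof -
  have "is_qf H0 lam alpha"
    using fg_free_subgrp[OF fg_free_H subgrp_H0 H0_subset] family H0_subset
    unfolding in_family_def is_qf_def by blast
  then show ?thesis using family H0_subset unfolding in_family_def by (cases F) auto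
qed

lemma family_H1: "in_family F H1 (neg_form lam) alpha"
proof -
  have "is_qf H1 (neg_form lam) alpha"
    using fg_free_subgrp[OF fg_free_H subgrp_H1 H1_subset] family H1_subset form1_neg.sym form1_neg.add_left
    unfolding in_family_def is_qf_def by blast
  moreover have "even (neg_form lam v v + alpha v) \<longleftrightarrow> even (lam v v + alpha v)" for v
    using even_add[of "2 * lam v v" "neg_form lam v v + alpha v"] by (simp add: neg_form_def)
  ultimately show ?thesis using family H1_subset unfolding in_family_def by (cases F) (auto simp: neg_form_def)
qed

lemma nondeg_H1: "nondeg H1 (neg_form lam)"
  unfolding nondeg_def
proof (intro ballI impI)
  fix v assume v: "v \<in> H1" and "adj H1 (neg_form lam) v = 0"
  then have "adj H1 lam v = 0" using form1.adj_neg_form by simp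
  then show "v = 0" using adj_H0_H1_zero_imp_zero adj_H0_eq_0_iff v H1_subset by blast
qed

lemma cls_H0_eq_iff:
  assumes v: "v \<in> H" and w: "w \<in> H"
  shows "cls H0 lam (adj H0 lam v) = cls H0 lam (adj H0 lam w) \<longleftrightarrow> (\<exists>a0\<in>H0. \<exists>a1\<in>H1. v - w = a0 + a1)"
proof -
  have "v - w - u \<in> H" if "u \<in> H0" for u
    using subgrp_diff[OF subgrp_H subgrp_diff[OF subgrp_H v w]] that H0_subset by blast
  then have "(\<exists>u\<in>H0. adj H0 lam (v - w - u) = 0) \<longleftrightarrow> (\<exists>u\<in>H0. v - w - u \<in> H1)"
    using adj_H0_eq_0_iff by blast
  also have "\<dots> \<longleftrightarrow> (\<exists>a0\<in>H0. \<exists>a1\<in>H1. v - w = a0 + a1)"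
    by (metis add_diff_cancel_left' diff_add_cancel add.commute)
  finally show ?thesis using form.cls_adj_eq_iff[OF subgrp_H0 H0_subset v w] by simp
qed

lemma cls_H1_eq_iff:
  assumes v: "v \<in> H" and w: "w \<in> H"
  shows "cls H1 lam (adj H1 lam v) = cls H1 lam (adj H1 lam w) \<longleftrightarrow> (\<exists>a0\<in>H0. \<exists>a1\<in>H1. v - w = a0 + a1)"
proof -
  have "v - w - u \<in> H" if "u \<in> H1" for u
    using subgrp_diff[OF subgrp_H subgrp_diff[OF subgrp_H v w]] that H1_subset by blast
  then have "(\<exists>u\<in>H1. adj H1 lam (v - w - u) = 0) \<longleftrightarrow> (\<exists>u\<in>H1. v - w - u \<in> H0)"
    using adj_H1_eq_0_iff by blast
  also have "\<dots> \<longleftrightarrow> (\<exists>a0\<in>H0. \<exists>a1\<in>H1. v - w = a0 + a1)"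
    by (metis add_diff_cancel_right' diff_add_cancel)
  finally show ?thesis using form.cls_adj_eq_iff[OF subgrp_H1 H1_subset v w] by simp
qed

lemma cls_H0_eq_iff_cls_H1_eq:
  "v \<in> H \<Longrightarrow> w \<in> H \<Longrightarrow> cls H0 lam (adj H0 lam v) = cls H0 lam (adj H0 lam w) \<longleftrightarrow>
     cls H1 (neg_form lam) (adj H1 lam v) = cls H1 (neg_form lam) (adj H1 lam w)"
  using cls_H0_eq_iff cls_H1_eq_iff form1.cls_neg_form by simp

definition theta :: "('v \<Rightarrow> int) set \<Rightarrow> ('v \<Rightarrow> int) set" where
  "theta c = cls H1 (neg_form lam) (adj H1 lam (SOME v. v \<in> H \<and> c = cls H0 lam (adj H0 lam v)))"

lemma theta_cls:
  assumes v: "v \<in> H"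
  shows "theta (cls H0 lam (adj H0 lam v)) = cls H1 (neg_form lam) (adj H1 lam v)"
proof -
  let ?P = "\<lambda>v'. v' \<in> H \<and> cls H0 lam (adj H0 lam v) = cls H0 lam (adj H0 lam v')"
  define v' where "v' = (SOME v'. ?P v')"
  have "?P v'" using someI[of ?P v] v unfolding v'_def by blast
  then have "cls H1 (neg_form lam) (adj H1 lam v') = cls H1 (neg_form lam) (adj H1 lam v)"
    using cls_H0_eq_iff_cls_H1_eq[OF v] by blast
  then show ?thesis unfolding theta_def v'_def .
qed

lemma dual_H0_eq_image: "dual H0 = adj H0 lam ` H"
proof (intro equalityI subsetI)
  fix x assume "x \<in> dual H0"
  then show "x \<in> adj H0 lam ` H"
    using nonsing_adj_restrict_surj[OF summand subgrp_H nonsing] by (metis image_eqI)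
qed (use form.adj_mem_dual[OF H0_subset subgrp_H0] in blast)

lemma dual_H1_eq_image: "dual H1 = adj H1 lam ` H"
proof (intro equalityI subsetI)
  fix x assume "x \<in> dual H1"
  then show "x \<in> adj H1 lam ` H"
    using nonsing_adj_restrict_surj[OF H1_direct_summand subgrp_H nonsing] by (metis image_eqI)
qed (use form.adj_mem_dual[OF H1_subset subgrp_H1] in blast)

lemma carrier_cok_H0: "carrier (cok_grp H0 lam) = (\<lambda>v. cls H0 lam (adj H0 lam v)) ` H"
  unfolding cok_grp_def dual_H0_eq_image by auto

lemma carrier_cok_H1: "carrier (cok_grp H1 (neg_form lam)) = (\<lambda>v. cls H1 (neg_form lam) (adj H1 lam v)) ` H"
  unfolding cok_grp_def dual_H1_eq_image by auto

lemma mult_cok_H0: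
  "v \<in> H \<Longrightarrow> w \<in> H \<Longrightarrow> cls H0 lam (adj H0 lam v) \<otimes>\<^bsub>cok_grp H0 lam\<^esub> cls H0 lam (adj H0 lam w)
     = cls H0 lam (adj H0 lam (v + w))"
  unfolding cok_grp_def
  using form0.cls_add[OF form.adj_mem_dual[OF H0_subset subgrp_H0] form.adj_mem_dual[OF H0_subset subgrp_H0]]
    form.adj_add[OF H0_subset]
  by simp

lemma mult_cok_H1:
  "v \<in> H \<Longrightarrow> w \<in> H \<Longrightarrow>
     cls H1 (neg_form lam) (adj H1 lam v) \<otimes>\<^bsub>cok_grp H1 (neg_form lam)\<^esub> cls H1 (neg_form lam) (adj H1 lam w)
     = cls H1 (neg_form lam) (adj H1 lam (v + w))"
  unfolding cok_grp_def
  using form1_neg.cls_add[OF form.adj_mem_dual[OF H1_subset subgrp_H1] form.adj_mem_dual[OF H1_subset subgrp_H1]]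
    form.adj_add[OF H1_subset]
  by simp

lemma theta_iso: "theta \<in> iso (cok_grp H0 lam) (cok_grp H1 (neg_form lam))"
proof -
  have "theta \<in> hom (cok_grp H0 lam) (cok_grp H1 (neg_form lam))"
    unfolding hom_def carrier_cok_H0 carrier_cok_H1
    using theta_cls mult_cok_H0 mult_cok_H1 subgrp_add[OF subgrp_H] by auto
  moreover have "inj_on theta (carrier (cok_grp H0 lam))"
  proof (rule inj_onI)
    fix c d assume "c \<in> carrier (cok_grp H0 lam)" "d \<in> carrier (cok_grp H0 lam)" "theta c = theta d"
    then obtain v w where "v \<in> H" "w \<in> H" "c = cls H0 lam (adj H0 lam v)" "d = cls H0 lam (adj H0 lam w)"
      "theta c = theta d" unfolding carrier_cok_H0 by blast
    then show "c = d" using theta_cls cls_H0_eq_iff_cls_H1_eq by simp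
  qed
  moreover have "theta ` carrier (cok_grp H0 lam) = carrier (cok_grp H1 (neg_form lam))"
    unfolding carrier_cok_H0 carrier_cok_H1 image_image using theta_cls by (intro image_cong) simp_all
  ultimately show ?thesis unfolding iso_def bij_betw_def by blast
qed

lemma characteristic_element:
  obtains c where "c \<in> H" "\<And>T. T \<subseteq> H \<Longrightarrow> dual_of T alpha = adj T lam c"
proof -
  have "additive_on H alpha" using family by (simp add: in_family_def is_qf_def additive_on_def)
  then have "dual_of H alpha \<in> dual H" by (rule dual_of_mem_dual[OF subgrp_H])
  then obtain c where c: "c \<in> H" "adj H lam c = dual_of H alpha" using nonsing unfolding nonsing_def by blast
  have "dual_of T alpha = adj T lam c" if "T \<subseteq> H" for T
  proof
    fix w show "dual_of T alpha w = adj T lam c w"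
      using fun_cong[OF c(2), of w] that by (cases "w \<in> T") (auto simp: dual_of_def)
  qed
  with c(1) show thesis by (rule that)
qed

lemma theta_cls_alpha: "theta (cls H0 lam (dual_of H0 alpha)) = cls H1 (neg_form lam) (dual_of H1 alpha)"
  using characteristic_element theta_cls H0_subset H1_subset by metis

lemma linv_H0_split:
  assumes v: "v \<in> H" and ra: "r \<noteq> 0" "a0 \<in> H0" "a1 \<in> H1" "zsc r v = a0 + a1" and y: "y \<in> dual H0"
  shows "linv H0 lam (adj H0 lam v) y = of_int (y a0) / of_int r"
proof -
  have "(\<lambda>w. r * adj H0 lam v w) = adj H0 lam (zsc r v)" using form.adj_zsc[OF H0_subset v] by simp
  also have "\<dots> = adj H0 lam a0 + adj H0 lam a1"
    using ra(2-4) form.adj_add[OF H0_subset] H0_subset H1_subset by auto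
  also have "\<dots> = adj H0 lam a0" using adj_H0_eq_0_iff ra(3) H1_subset by auto
  finally show ?thesis using form0.linv_eq[OF nondeg_H0 ra(1,2) _ y] by simp
qed

lemma linv_H1_split:
  assumes v: "v \<in> H" and ra: "r \<noteq> 0" "a0 \<in> H0" "a1 \<in> H1" "zsc r v = a0 + a1" and y: "y \<in> dual H1"
  shows "linv H1 (neg_form lam) (adj H1 lam v) y = - of_int (y a1) / of_int r"
proof -
  have "(\<lambda>w. r * adj H1 lam v w) = adj H1 lam (zsc r v)" using form.adj_zsc[OF H1_subset v] by simp
  also have "\<dots> = adj H1 lam a0 + adj H1 lam a1"
    using ra(2-4) form.adj_add[OF H1_subset] H0_subset H1_subset by auto
  also have "\<dots> = adj H1 lam a1" using adj_H1_of_H0[OF ra(2)] by simp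
  also have "\<dots> = adj H1 (neg_form lam) (- a1)"
    using form1.adj_neg_form form1.adj_uminus[OF order_refl ra(3)] by simp
  finally have "linv H1 (neg_form lam) (adj H1 lam v) y = of_int (y (- a1)) / of_int r"
    using form1_neg.linv_eq[OF nondeg_H1 ra(1) subgrp_uminus[OF subgrp_H1 ra(3)] _ y] by simp
  then show ?thesis using additive_on_uminus[OF subgrp_H1 dual_additive_on[OF y] ra(3)] by simp
qed

lemma linv_adj_diff:
  assumes v: "v \<in> H" and u: "u \<in> H"
  shows "linv H0 lam (adj H0 lam v) (adj H0 lam u) - linv H1 (neg_form lam) (adj H1 lam v) (adj H1 lam u)
    = of_int (lam u v)"
proof -
  obtain r a0 a1 where ra: "r \<noteq> 0" "a0 \<in> H0" "a1 \<in> H1" "zsc r v = a0 + a1"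
    using multiple_splits[OF v] by blast
  have "lam u a0 + lam u a1 = r * lam u v"
    using form.add_right[OF u] form.zsc_right[OF u v] ra(2-4) H0_subset H1_subset by (metis subsetD)
  then have "of_int (lam u a0) + of_int (lam u a1) = (of_int r * of_int (lam u v) :: rat)"
    by (metis of_int_add of_int_mult)
  moreover have "linv H0 lam (adj H0 lam v) (adj H0 lam u) = of_int (lam u a0) / of_int r"
    using linv_H0_split[OF v ra form.adj_mem_dual[OF H0_subset subgrp_H0 u]] ra(2) by simp
  moreover have "linv H1 (neg_form lam) (adj H1 lam v) (adj H1 lam u) = - of_int (lam u a1) / of_int r"
    using linv_H1_split[OF v ra form.adj_mem_dual[OF H1_subset subgrp_H1 u]] ra(3) by simp
  ultimately show ?thesis using ra(1) by (simp add: add_divide_distrib[symmetric])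
qed

lemma qval_adj_diff_Ints:
  assumes v: "v \<in> H"
  shows "qval F H0 lam alpha (adj H0 lam v) - qval F H1 (neg_form lam) alpha (adj H1 lam v) \<in> \<int>"
proof -
  obtain c where c: "c \<in> H" "\<And>T. T \<subseteq> H \<Longrightarrow> dual_of T alpha = adj T lam c"
    using characteristic_element by blast
  have "lam c v = alpha v" using fun_cong[OF c(2)[OF order_refl], of v] v by (simp add: dual_of_def)
  then have linear: "linv H0 lam (adj H0 lam v) (dual_of H0 alpha)
      - linv H1 (neg_form lam) (adj H1 lam v) (dual_of H1 alpha) = of_int (alpha v)"
    using linv_adj_diff[OF v c(1)] c(2)[OF H0_subset] c(2)[OF H1_subset] by simp
  note square = linv_adj_diff[OF v v]
  show ?thesis
  proof (cases "F = Fc")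
    case True
    have "even (lam v v + alpha v)" using True family v by (simp add: in_family_def)
    then obtain k where "lam v v + alpha v = 2 * k" by (rule evenE)
    then have "qval F H0 lam alpha (adj H0 lam v) - qval F H1 (neg_form lam) alpha (adj H1 lam v) = of_int k"
      using True square linear unfolding qval_def by (simp add: field_simps)
    then show ?thesis by simp
  next
    case False
    then have "even (lam v v)" using family v by (cases F) (simp_all add: in_family_def)
    then obtain k where "lam v v = 2 * k" by (rule evenE)
    then have "qval F H0 lam alpha (adj H0 lam v) - qval F H1 (neg_form lam) alpha (adj H1 lam v) = of_int k"
      using False square unfolding qval_def by (cases F) (simp_all add: field_simps)
    then show ?thesis by simp
  qed
qed

lemma cok_common_representative:
  assumes c: "c \<in> carrier (cok_grp H0 lam)"
  obtains v where "v \<in> H" "(SOME x. x \<in> c) = adj H0 lam v" "(SOME y. y \<in> theta c) = adj H1 lam v"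
proof -
  obtain v where v: "v \<in> H" "c = cls H0 lam (adj H0 lam v)" using c unfolding carrier_cok_H0 by blast
  have v_dual: "adj H0 lam v \<in> dual H0" using form.adj_mem_dual[OF H0_subset subgrp_H0 v(1)] .
  have "(SOME x. x \<in> c) \<in> c" using form0.cls_self[OF v_dual] v(2) by (metis someI)
  then obtain u0 where u0: "u0 \<in> H0" "(SOME x. x \<in> c) = adj H0 lam v + adj H0 lam u0"
    using form0.cls_mem[OF v_dual] v(2) by blast
  define v2 where "v2 = v + u0"
  have v2: "v2 \<in> H" "(SOME x. x \<in> c) = adj H0 lam v2"
    using u0 v(1) H0_subset subgrp_add[OF subgrp_H] form.adj_add[OF H0_subset] unfolding v2_def by auto
  then have "c = cls H0 lam (adj H0 lam v2)"
    using form0.cls_of_mem[OF v_dual] \<open>(SOME x. x \<in> c) \<in> c\<close> v(2) by metis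
  then have tc: "theta c = cls H1 lam (adj H1 lam v2)" using theta_cls[OF v2(1)] form1.cls_neg_form by simp
  have v2_dual: "adj H1 lam v2 \<in> dual H1" using form.adj_mem_dual[OF H1_subset subgrp_H1 v2(1)] .
  have "(SOME y. y \<in> theta c) \<in> theta c" using form1.cls_self[OF v2_dual] tc by (metis someI)
  then obtain u1 where u1: "u1 \<in> H1" "(SOME y. y \<in> theta c) = adj H1 lam v2 + adj H1 lam u1"
    using form1.cls_mem[OF v2_dual] tc by blast
  have "v2 + u1 \<in> H" using u1(1) v2(1) H1_subset subgrp_add[OF subgrp_H] by blast
  moreover have "(SOME x. x \<in> c) = adj H0 lam (v2 + u1)" "(SOME y. y \<in> theta c) = adj H1 lam (v2 + u1)"
    using v2 u1 form.adj_add[OF H0_subset] form.adj_add[OF H1_subset] adj_H0_eq_0_iff H1_subset by auto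
  ultimately show thesis by (rule that)
qed

lemma qlink_theta:
  assumes "c \<in> carrier (cok_grp H0 lam)"
  shows "qlink F H1 (neg_form lam) alpha (theta c) = qlink F H0 lam alpha c"
proof -
  obtain v where v: "v \<in> H" "(SOME x. x \<in> c) = adj H0 lam v" "(SOME y. y \<in> theta c) = adj H1 lam v"
    using cok_common_representative[OF assms] by blast
  let ?q0 = "qval F H0 lam alpha (adj H0 lam v)" and ?q1 = "qval F H1 (neg_form lam) alpha (adj H1 lam v)"
  have "frac ?q0 = frac (?q1 + (?q0 - ?q1))" by simp
  also have "\<dots> = frac ?q1" using frac_add_int_right[OF qval_adj_diff_Ints[OF v(1)]] .
  finally show ?thesis unfolding qlink_def v(2,3) by simp
qed

lemma theta_lf_isometry: "lf_isometry F H0 lam alpha H1 (neg_form lam) alpha theta"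
  unfolding lf_isometry_def using theta_iso theta_cls_alpha qlink_theta by blast

definition glue_map :: "'v \<Rightarrow> ('v \<Rightarrow> int) \<times> ('v \<Rightarrow> int)" where
  "glue_map v = (adj H0 lam v, adj H1 lam v)"

lemma inj_on_glue_map: "inj_on glue_map H"
proof (rule inj_onI)
  fix v w assume v: "v \<in> H" and w: "w \<in> H" and "glue_map v = glue_map w"
  then have "adj H0 lam (v - w) = 0" "adj H1 lam (v - w) = 0"
    using form.adj_diff[OF H0_subset v w] form.adj_diff[OF H1_subset v w] unfolding glue_map_def by simp_all
  then have "v - w = 0" using adj_H0_H1_zero_imp_zero subgrp_diff[OF subgrp_H v w] by blast
  then show "v = w" by simp
qed

lemma glue_map_image: "glue_map ` H = glue_carrier H0 lam H1 (neg_form lam) theta"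
proof (intro equalityI subsetI)
  fix z assume "z \<in> glue_map ` H"
  then show "z \<in> glue_carrier H0 lam H1 (neg_form lam) theta"
    unfolding glue_carrier_def glue_map_def dual_H0_eq_image dual_H1_eq_image using theta_cls by auto
next
  fix z assume "z \<in> glue_carrier H0 lam H1 (neg_form lam) theta"
  then obtain v w where v: "v \<in> H" and w: "w \<in> H" and z: "z = (adj H0 lam v, adj H1 lam w)"
    and eq: "theta (cls H0 lam (adj H0 lam v)) = cls H1 (neg_form lam) (adj H1 lam w)"
    unfolding glue_carrier_def dual_H0_eq_image dual_H1_eq_image by auto
  have "cls H1 lam (adj H1 lam w) = cls H1 lam (adj H1 lam v)"
    using eq theta_cls[OF v] form1.cls_neg_form by simp
  then obtain u where u: "u \<in> H1" "adj H1 lam w = adj H1 lam v + adj H1 lam u"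
    using form1.cls_eq_iff form.adj_mem_dual[OF H1_subset subgrp_H1] v w by blast
  have "v + u \<in> H" using u(1) v H1_subset subgrp_add[OF subgrp_H] by blast
  moreover have "z = glue_map (v + u)"
    using z u v form.adj_add[OF H0_subset] form.adj_add[OF H1_subset] adj_H0_eq_0_iff H1_subset
    unfolding glue_map_def by auto
  ultimately show "z \<in> glue_map ` H" by blast
qed

lemma glue_isometric:
  "isometric_to H lam alpha (glue_carrier H0 lam H1 (neg_form lam) theta)
     (glue_form H0 lam H1 (neg_form lam)) (glue_lin H0 lam alpha H1 (neg_form lam) alpha)"
  unfolding isometric_to_def
proof (intro exI[of _ glue_map] conjI ballI)
  show "bij_betw glue_map H (glue_carrier H0 lam H1 (neg_form lam) theta)"
    using inj_on_glue_map glue_map_image by (simp add: bij_betw_def)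
next
  fix v w assume v: "v \<in> H" and w: "w \<in> H"
  show "glue_map (v + w) = glue_map v + glue_map w"
    using form.adj_add[OF H0_subset v w] form.adj_add[OF H1_subset v w] by (simp add: glue_map_def)
  show "glue_form H0 lam H1 (neg_form lam) (glue_map v) (glue_map w) = of_int (lam v w)"
    using linv_adj_diff[OF v w] form.sym[OF v w] by (simp add: glue_form_def glue_map_def)
next
  fix v assume v: "v \<in> H"
  obtain c where c: "c \<in> H" "\<And>T. T \<subseteq> H \<Longrightarrow> dual_of T alpha = adj T lam c"
    using characteristic_element by blast
  have "lam v c = alpha v"
    using fun_cong[OF c(2)[OF order_refl], of v] form.sym[OF v c(1)] v by (simp add: dual_of_def)
  then show "glue_lin H0 lam alpha H1 (neg_form lam) alpha (glue_map v) = of_int (alpha v)"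
    using linv_adj_diff[OF c(1) v] c(2)[OF H0_subset] c(2)[OF H1_subset]
    by (simp add: glue_lin_def glue_form_def glue_map_def)
qed

end

theorem lemma1p4:
  fixes F :: family and H H0 :: "'v::ab_group_add set"
    and lam :: "'v \<Rightarrow> 'v \<Rightarrow> int" and alpha :: "'v \<Rightarrow> int"
  assumes "in_family F H lam alpha"
    and "nonsing H lam"
    and "direct_summand H0 H"
    and "nondeg H0 lam"
  defines "H1 \<equiv> {v \<in> H. \<forall>v0\<in>H0. lam v v0 = 0}"
  shows "direct_summand H1 H
    \<and> in_family F H0 lam alpha \<and> nondeg H0 lam
    \<and> in_family F H1 (neg_form lam) alpha \<and> nondeg H1 (neg_form lam)
    \<and> (\<exists>theta. lf_isometry F H0 lam alpha H1 (neg_form lam) alpha theta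
         \<and> isometric_to H lam alpha
             (glue_carrier H0 lam H1 (neg_form lam) theta)
             (glue_form H0 lam H1 (neg_form lam))
             (glue_lin H0 lam alpha H1 (neg_form lam) alpha))"
proof -
  interpret nondeg_summand F H H0 lam alpha H1
    using assms by unfold_locales simp_all
  show ?thesis
    using H1_direct_summand family_H0 nondeg_H0 family_H1 nondeg_H1 theta_lf_isometry glue_isometric
    by blast
qed

end
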